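(* Let $n>3$ and let $L$ and ${}^*L=e^{\sigma(x)}L+\beta$ be as in the context. Then ${}^*M_{ij}=M_{ij}-\frac{1}{2\,{}^*L}H_{ij}$.
   Context: $M$ is a smooth manifold of dimension $n$ with local coordinates $(x^i)$ and induced fiber coordinates $(y^i)$ on $TM$. $L(x,y)$ is a Finsler metric: positive and smooth for $y\neq0$, positively homogeneous of degree 1 in $y$, with positive definite fundamental tensor $g_{ij}=\frac12\frac{\partial^2L^2}{\partial y^i\partial y^j}$ and inverse $g^{ij}$. $\sigma(x)$ is a smooth function on $M$ and $\beta(x,y)=b_i(x)y^i$ is a 1-form; the conformal $\beta$-change is ${}^*L=e^{\sigma(x)}L+\beta$, assumed to be again a Finsler metric. Notation: $l_i=\partial L/\partial y^i$, $l^i=g^{ij}l_j$, $h_{ij}=g_{ij}-l_il_j$, $c_{ijk}=\frac12\partial g_{ij}/\partial y^k$, $c_i{}^r{}_j=g^{rk}c_{ijk}$, $b^i=g^{ij}b_j$, $m_i=b_i-\frac{\beta}{L}l_i$, $m^i=g^{ij}m_j$, $m^2=m_im^i$, $H_{ij}=c_i{}^r{}_jm_r+\frac{1}{2\,{}^*L}m_im_j+\frac{1}{4\,{}^*L}h_{ij}m^2$. $S_{hijk}=c_{ijr}c_h{}^r{}_k-c_{ikr}c_h{}^r{}_j$, $S_{ik}=g^{hj}S_{hijk}$, $S=g^{ik}S_{ik}$, $M_{ij}=\frac{1}{n-3}\big[S_{ij}-\frac{S\,h_{ij}}{2(n-2)}\big]$. Quantities built from ${}^*L$ by the same formulas (using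 ${}^*g_{ij}$ and its inverse ${}^*g^{ij}$) are denoted with a left asterisk. *)

theory Defs
  imports "HOL-Analysis.Analysis"
begin

definition dirD :: "('a::real_normed_vector \<Rightarrow> real) \<Rightarrow> 'a \<Rightarrow> 'a \<Rightarrow> real" where
  "dirD f v p = deriv (\<lambda>t. f (p + t *\<^sub>R v)) 0"

fun iterD :: "'a::real_normed_vector list \<Rightarrow> ('a \<Rightarrow> real) \<Rightarrow> 'a \<Rightarrow> real" where
  "iterD [] f = f"
| "iterD (v # vs) f = dirD (iterD vs f) v"

definition smooth_on :: "'a::euclidean_space set \<Rightarrow> ('a \<Rightarrow> real) \<Rightarrow> bool" where
  "smooth_on S f \<longleftrightarrow> open S \<and>
     (\<forall>vs. set vs \<subseteq> Basis \<longrightarrow> (\<forall>p\<in>S. iterD vs f differentiable (at p)))"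

section \<open>Fibre quantities of a Finsler function F = L(x,.) at fixed x\<close>

definition pdy :: "'n::finite \<Rightarrow> (real^'n \<Rightarrow> real) \<Rightarrow> real^'n \<Rightarrow> real" where
  "pdy i F = dirD F (axis i 1)"

definition fund :: "(real^'n::finite \<Rightarrow> real) \<Rightarrow> 'n \<Rightarrow> 'n \<Rightarrow> real^'n \<Rightarrow> real" where
  "fund F i j y = 1/2 * pdy i (pdy j (\<lambda>z. (F z)^2)) y"

definition gmat :: "(real^'n::finite \<Rightarrow> real) \<Rightarrow> real^'n \<Rightarrow> real^'n^'n" where
  "gmat F y = (\<chi> i j. fund F i j y)"

definition ginv :: "(real^'n::finite \<Rightarrow> real) \<Rightarrow> 'n \<Rightarrow> 'n \<Rightarrow> real^'n \<Rightarrow> real" where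
  "ginv F i j y = matrix_inv (gmat F y) $ i $ j"

definition lcov :: "(real^'n::finite \<Rightarrow> real) \<Rightarrow> 'n \<Rightarrow> real^'n \<Rightarrow> real" where
  "lcov F i y = pdy i F y"

definition hang :: "(real^'n::finite \<Rightarrow> real) \<Rightarrow> 'n \<Rightarrow> 'n \<Rightarrow> real^'n \<Rightarrow> real" where
  "hang F i j y = fund F i j y - lcov F i y * lcov F j y"

definition cten :: "(real^'n::finite \<Rightarrow> real) \<Rightarrow> 'n \<Rightarrow> 'n \<Rightarrow> 'n \<Rightarrow> real^'n \<Rightarrow> real" where
  "cten F i j k y = 1/2 * pdy k (fund F i j) y"

definition cmix :: "(real^'n::finite \<Rightarrow> real) \<Rightarrow> 'n \<Rightarrow> 'n \<Rightarrow> 'n \<Rightarrow> real^'n \<Rightarrow> real" where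
  "cmix F i r j y = (\<Sum>k\<in>UNIV. ginv F r k y * cten F i j k y)"

definition S4 :: "(real^'n::finite \<Rightarrow> real) \<Rightarrow> 'n \<Rightarrow> 'n \<Rightarrow> 'n \<Rightarrow> 'n \<Rightarrow> real^'n \<Rightarrow> real" where
  "S4 F h i j k y = (\<Sum>r\<in>UNIV. cten F i j r y * cmix F h r k y - cten F i k r y * cmix F h r j y)"

definition S2 :: "(real^'n::finite \<Rightarrow> real) \<Rightarrow> 'n \<Rightarrow> 'n \<Rightarrow> real^'n \<Rightarrow> real" where
  "S2 F i k y = (\<Sum>h\<in>UNIV. \<Sum>j\<in>UNIV. ginv F h j y * S4 F h i j k y)"

definition S0 :: "(real^'n::finite \<Rightarrow> real) \<Rightarrow> real^'n \<Rightarrow> real" where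
  "S0 F y = (\<Sum>i\<in>UNIV. \<Sum>k\<in>UNIV. ginv F i k y * S2 F i k y)"

definition Mten :: "(real^'n::finite \<Rightarrow> real) \<Rightarrow> 'n \<Rightarrow> 'n \<Rightarrow> real^'n \<Rightarrow> real" where
  "Mten F i j y = 1 / (real CARD('n) - 3) *
     (S2 F i j y - S0 F y * hang F i j y / (2 * (real CARD('n) - 2)))"

text \<open>Here F = L(x,.), bv = (b_i(x)), Fs = *L(x,.).\<close>
definition betaf :: "real^'n::finite \<Rightarrow> real^'n \<Rightarrow> real" where
  "betaf bv y = (\<Sum>i\<in>UNIV. bv $ i * y $ i)"

definition mcov :: "(real^'n::finite \<Rightarrow> real) \<Rightarrow> real^'n \<Rightarrow> 'n \<Rightarrow> real^'n \<Rightarrow> real" where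
  "mcov F bv i y = bv $ i - betaf bv y / F y * lcov F i y"

definition mcon :: "(real^'n::finite \<Rightarrow> real) \<Rightarrow> real^'n \<Rightarrow> 'n \<Rightarrow> real^'n \<Rightarrow> real" where
  "mcon F bv i y = (\<Sum>j\<in>UNIV. ginv F i j y * mcov F bv j y)"

definition msq :: "(real^'n::finite \<Rightarrow> real) \<Rightarrow> real^'n \<Rightarrow> real^'n \<Rightarrow> real" where
  "msq F bv y = (\<Sum>i\<in>UNIV. mcov F bv i y * mcon F bv i y)"

definition Hten :: "(real^'n::finite \<Rightarrow> real) \<Rightarrow> (real^'n \<Rightarrow> real) \<Rightarrow> real^'n \<Rightarrow> 'n \<Rightarrow> 'n \<Rightarrow> real^'n \<Rightarrow> real" where
  "Hten F Fs bv i j y =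
     (\<Sum>r\<in>UNIV. cmix F i r j y * mcov F bv r y)
     + mcov F bv i y * mcov F bv j y / (2 * Fs y)
     + hang F i j y * msq F bv y / (4 * Fs y)"

section \<open>Finsler metric on a coordinate chart U (an open subset of R^n) of M\<close>

definition finsler_on :: "(real^'n::finite) set \<Rightarrow> (real^'n \<Rightarrow> real^'n \<Rightarrow> real) \<Rightarrow> bool" where
  "finsler_on U L \<longleftrightarrow>
     open U \<and>
     smooth_on {p :: (real^'n) \<times> (real^'n). fst p \<in> U \<and> snd p \<noteq> 0} (\<lambda>p. L (fst p) (snd p)) \<and>
     (\<forall>x\<in>U. \<forall>y. y \<noteq> 0 \<longrightarrow> L x y > 0) \<and>
     (\<forall>x\<in>U. \<forall>y. y \<noteq> 0 \<longrightarrow> (\<forall>t>0. L x (t *\<^sub>R y) = t * L x y)) \<and>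
     (\<forall>x\<in>U. \<forall>y. y \<noteq> 0 \<longrightarrow>
        (\<forall>v::real^'n. v \<noteq> 0 \<longrightarrow> (\<Sum>i\<in>UNIV. \<Sum>j\<in>UNIV. fund (L x) i j y * v $ i * v $ j) > 0))"

definition conf_beta :: "(real^'n::finite \<Rightarrow> real) \<Rightarrow> (real^'n \<Rightarrow> real^'n) \<Rightarrow>
    (real^'n \<Rightarrow> real^'n \<Rightarrow> real) \<Rightarrow> real^'n \<Rightarrow> real^'n \<Rightarrow> real" where
  "conf_beta \<sigma> b L x y = exp (\<sigma> x) * L x y + betaf (b x) y"

end

theory Submission
  imports Defs
begin

text \<open>
  Fix x, write F = L(x,.), a = exp(sigma x), and let Q_ij, R_ijk be the second and third
  y-derivatives of F. By 1-homogeneity g_ij = l_i l_j + F Q_ij, so h_ij = F Q_ij, and 2 c_ijk is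
  the symmetrisation of Q_ij l_k plus F R_ijk. As beta is linear in y, passing from F to
  *L = a F + beta multiplies Q and R by a and replaces l by (*L/F) l + m. Hence *h = p h with
  p = a *L/F, and *c = p (c + mu/(2 *L)) with mu_ijk = h_ij m_k + h_ik m_j + h_jk m_i.

  All tensors involved are indicatory (they vanish when contracted with y), and on indicatory
  tensors *g^ij acts as g^ij/p. Therefore *S_ik is the S_ik built from g and the perturbed
  tensor c + mu/(2 *L), while *S is its trace divided by p. Expanding to second order in mu,
  every multiple of h_ik cancels in the combination M_ik, and what remains is exactly
  -(n - 3) H_ik/(2 *L).
\<close>

section \<open>Contractions of tensors over a finite index type\<close>

lemma sum_mult_delta_diff:
  fixes f y :: "'n::finite \<Rightarrow> 'a::comm_ring_1"
  shows "(\<Sum>j\<in>UNIV. f j * ((if j = k then 1 else 0) - y j * c)) = f k - c * (\<Sum>j\<in>UNIV. f j * y j)"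
proof -
  have "(\<Sum>j\<in>UNIV. f j * ((if j = k then 1 else 0) - y j * c))
      = (\<Sum>j\<in>UNIV. (if j = k then f j else 0) - c * (f j * y j))"
    by (rule sum.cong) (auto simp: algebra_simps)
  then show ?thesis
    by (simp add: sum_subtractf sum_distrib_left)
qed

lemma sum_mult_sum_swap:
  fixes f :: "'a \<Rightarrow> 'b::semiring_0"
  shows "(\<Sum>h\<in>A. f h * (\<Sum>r\<in>B. X h r)) = (\<Sum>r\<in>B. \<Sum>h\<in>A. f h * X h r)"
  by (simp add: sum_distrib_left sum.swap[of _ A])

lemma sum_mult_sum2_swap:
  fixes f :: "'a \<Rightarrow> 'b::semiring_0"
  shows "(\<Sum>h\<in>A. f h * (\<Sum>r\<in>B. \<Sum>s\<in>C. X h r s)) = (\<Sum>r\<in>B. \<Sum>s\<in>C. \<Sum>h\<in>A. f h * X h r s)"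
proof -
  have "(\<Sum>h\<in>A. f h * (\<Sum>r\<in>B. \<Sum>s\<in>C. X h r s)) = (\<Sum>h\<in>A. \<Sum>r\<in>B. \<Sum>s\<in>C. f h * X h r s)"
    by (simp add: sum_distrib_left)
  also have "\<dots> = (\<Sum>r\<in>B. \<Sum>h\<in>A. \<Sum>s\<in>C. f h * X h r s)"
    by (rule sum.swap)
  also have "\<dots> = (\<Sum>r\<in>B. \<Sum>s\<in>C. \<Sum>h\<in>A. f h * X h r s)"
    by (rule sum.cong[OF refl], rule sum.swap)
  finally show ?thesis .
qed

lemma sum_swap3:
  fixes X :: "'a \<Rightarrow> 'b \<Rightarrow> 'c \<Rightarrow> 'd::comm_monoid_add"
  shows "(\<Sum>h\<in>A. \<Sum>j\<in>B. \<Sum>r\<in>C. X h j r) = (\<Sum>r\<in>C. \<Sum>h\<in>A. \<Sum>j\<in>B. X h j r)"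
proof -
  have "(\<Sum>h\<in>A. \<Sum>j\<in>B. \<Sum>r\<in>C. X h j r) = (\<Sum>h\<in>A. \<Sum>r\<in>C. \<Sum>j\<in>B. X h j r)"
    by (rule sum.cong[OF refl], rule sum.swap)
  also have "\<dots> = (\<Sum>r\<in>C. \<Sum>h\<in>A. \<Sum>j\<in>B. X h j r)"
    by (rule sum.swap)
  finally show ?thesis .
qed

definition symmetric3 :: "('n \<Rightarrow> 'n \<Rightarrow> 'n \<Rightarrow> real) \<Rightarrow> bool" where
  "symmetric3 d \<longleftrightarrow> (\<forall>i j k. d i j k = d j i k \<and> d i j k = d i k j)"

definition indicatory :: "('n::finite \<Rightarrow> real) \<Rightarrow> ('n \<Rightarrow> 'n \<Rightarrow> 'n \<Rightarrow> real) \<Rightarrow> bool" where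
  "indicatory y d \<longleftrightarrow> (\<forall>i j. (\<Sum>r\<in>UNIV. d i j r * y r) = 0)"

definition raise :: "('n::finite \<Rightarrow> 'n \<Rightarrow> real) \<Rightarrow> ('n \<Rightarrow> real) \<Rightarrow> 'n \<Rightarrow> real" where
  "raise gi v r = (\<Sum>s\<in>UNIV. gi r s * v s)"

definition raise12 :: "('n::finite \<Rightarrow> 'n \<Rightarrow> real) \<Rightarrow> ('n \<Rightarrow> 'n \<Rightarrow> 'n \<Rightarrow> real) \<Rightarrow> 'n \<Rightarrow> 'n \<Rightarrow> 'n \<Rightarrow> real" where
  "raise12 gi e j r k = (\<Sum>h\<in>UNIV. \<Sum>s\<in>UNIV. gi h j * gi r s * e h k s)"

definition contr_cross :: "('n::finite \<Rightarrow> 'n \<Rightarrow> real) \<Rightarrow> ('n \<Rightarrow> 'n \<Rightarrow> 'n \<Rightarrow> real) \<Rightarrow> ('n \<Rightarrow> 'n \<Rightarrow> 'n \<Rightarrow> real) \<Rightarrow> 'n \<Rightarrow> 'n \<Rightarrow> real" where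
  "contr_cross gi d e i k = (\<Sum>h\<in>UNIV. \<Sum>j\<in>UNIV. \<Sum>r\<in>UNIV. \<Sum>s\<in>UNIV. gi h j * gi r s * d i j r * e h k s)"

definition contr_trace :: "('n::finite \<Rightarrow> 'n \<Rightarrow> real) \<Rightarrow> ('n \<Rightarrow> 'n \<Rightarrow> 'n \<Rightarrow> real) \<Rightarrow> ('n \<Rightarrow> 'n \<Rightarrow> 'n \<Rightarrow> real) \<Rightarrow> 'n \<Rightarrow> 'n \<Rightarrow> real" where
  "contr_trace gi d e i k = (\<Sum>h\<in>UNIV. \<Sum>j\<in>UNIV. \<Sum>r\<in>UNIV. \<Sum>s\<in>UNIV. gi h j * gi r s * d i k r * e h j s)"

definition trace3 :: "('n::finite \<Rightarrow> 'n \<Rightarrow> real) \<Rightarrow> ('n \<Rightarrow> 'n \<Rightarrow> 'n \<Rightarrow> real) \<Rightarrow> 'n \<Rightarrow> real" where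
  "trace3 gi e s = (\<Sum>h\<in>UNIV. \<Sum>j\<in>UNIV. gi h j * e h j s)"

definition transvect :: "('n::finite \<Rightarrow> 'n \<Rightarrow> real) \<Rightarrow> ('n \<Rightarrow> 'n \<Rightarrow> 'n \<Rightarrow> real) \<Rightarrow> ('n \<Rightarrow> real) \<Rightarrow> 'n \<Rightarrow> 'n \<Rightarrow> real" where
  "transvect gi d v i k = (\<Sum>r\<in>UNIV. d i k r * raise gi v r)"

definition sym_prod :: "('n \<Rightarrow> 'n \<Rightarrow> real) \<Rightarrow> ('n \<Rightarrow> real) \<Rightarrow> 'n \<Rightarrow> 'n \<Rightarrow> 'n \<Rightarrow> real" where
  "sym_prod hh m i j k = hh i j * m k + hh i k * m j + hh j k * m i"

lemma symmetric3D:
  assumes "symmetric3 d"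
  shows "d i j k = d j i k" "d i j k = d i k j" "d i j k = d k j i" "d i j k = d j k i" "d i j k = d k i j"
  using assms unfolding symmetric3_def by metis+

lemma indicatoryD:
  assumes "symmetric3 d" "indicatory y d"
  shows "(\<Sum>r\<in>UNIV. d i j r * y r) = 0" "(\<Sum>r\<in>UNIV. d i r j * y r) = 0" "(\<Sum>r\<in>UNIV. d r i j * y r) = 0"
proof -
  show "(\<Sum>r\<in>UNIV. d i j r * y r) = 0" using assms(2) unfolding indicatory_def by blast
  show "(\<Sum>r\<in>UNIV. d i r j * y r) = 0"
    using assms(2) unfolding indicatory_def by (metis (no_types, lifting) assms(1) sum.cong symmetric3D(2))
  show "(\<Sum>r\<in>UNIV. d r i j * y r) = 0"
    using assms(2) unfolding indicatory_def by (metis (no_types, lifting) assms(1) sum.cong symmetric3D(4))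
qed

lemma contr_cross_raise12: "contr_cross gi d e i k = (\<Sum>j\<in>UNIV. \<Sum>r\<in>UNIV. d i j r * raise12 gi e j r k)"
proof -
  have "contr_cross gi d e i k = (\<Sum>j\<in>UNIV. \<Sum>h\<in>UNIV. \<Sum>r\<in>UNIV. \<Sum>s\<in>UNIV. gi h j * gi r s * d i j r * e h k s)"
    unfolding contr_cross_def by (rule sum.swap)
  also have "\<dots> = (\<Sum>j\<in>UNIV. \<Sum>r\<in>UNIV. \<Sum>h\<in>UNIV. \<Sum>s\<in>UNIV. gi h j * gi r s * d i j r * e h k s)"
    by (rule sum.cong[OF refl], rule sum.swap)
  also have "\<dots> = (\<Sum>j\<in>UNIV. \<Sum>r\<in>UNIV. d i j r * raise12 gi e j r k)"
    unfolding raise12_def by (simp add: sum_distrib_left ac_simps)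
  finally show ?thesis .
qed

lemma contr_trace_trace3: "contr_trace gi d e i k = (\<Sum>r\<in>UNIV. d i k r * raise gi (trace3 gi e) r)"
proof -
  have "contr_trace gi d e i k = (\<Sum>h\<in>UNIV. \<Sum>r\<in>UNIV. \<Sum>j\<in>UNIV. \<Sum>s\<in>UNIV. gi h j * gi r s * d i k r * e h j s)"
    unfolding contr_trace_def by (rule sum.cong[OF refl], rule sum.swap)
  also have "\<dots> = (\<Sum>r\<in>UNIV. \<Sum>h\<in>UNIV. \<Sum>j\<in>UNIV. \<Sum>s\<in>UNIV. gi h j * gi r s * d i k r * e h j s)"
    by (rule sum.swap)
  also have "\<dots> = (\<Sum>r\<in>UNIV. \<Sum>h\<in>UNIV. \<Sum>s\<in>UNIV. \<Sum>j\<in>UNIV. gi h j * gi r s * d i k r * e h j s)"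
    by (rule sum.cong[OF refl], rule sum.cong[OF refl], rule sum.swap)
  also have "\<dots> = (\<Sum>r\<in>UNIV. \<Sum>s\<in>UNIV. \<Sum>h\<in>UNIV. \<Sum>j\<in>UNIV. gi h j * gi r s * d i k r * e h j s)"
    by (rule sum.cong[OF refl], rule sum.swap)
  also have "\<dots> = (\<Sum>r\<in>UNIV. d i k r * raise gi (trace3 gi e) r)"
    unfolding raise_def trace3_def by (simp add: sum_distrib_left ac_simps)
  finally show ?thesis .
qed

lemma trace3_indicatory:
  assumes "indicatory y d"
  shows "(\<Sum>s\<in>UNIV. trace3 gi d s * y s) = 0"
proof -
  have "(\<Sum>s\<in>UNIV. trace3 gi d s * y s) = (\<Sum>s\<in>UNIV. y s * (\<Sum>h\<in>UNIV. \<Sum>j\<in>UNIV. gi h j * d h j s))"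
    unfolding trace3_def by (simp add: mult_ac)
  also have "\<dots> = (\<Sum>h\<in>UNIV. \<Sum>j\<in>UNIV. \<Sum>s\<in>UNIV. y s * (gi h j * d h j s))"
    by (rule sum_mult_sum2_swap)
  also have "\<dots> = (\<Sum>h\<in>UNIV. \<Sum>j\<in>UNIV. gi h j * (\<Sum>s\<in>UNIV. d h j s * y s))"
    by (simp add: sum_distrib_left mult_ac)
  also have "\<dots> = 0"
    using assms by (simp add: indicatory_def)
  finally show ?thesis .
qed

lemma trace_transvect:
  "(\<Sum>i\<in>UNIV. \<Sum>k\<in>UNIV. gi i k * transvect gi c m i k) = (\<Sum>r\<in>UNIV. trace3 gi c r * raise gi m r)"
proof -
  have "(\<Sum>i\<in>UNIV. \<Sum>k\<in>UNIV. gi i k * transvect gi c m i k)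
      = (\<Sum>i\<in>UNIV. \<Sum>k\<in>UNIV. \<Sum>r\<in>UNIV. raise gi m r * (gi i k * c i k r))"
    unfolding transvect_def by (simp add: sum_distrib_left mult_ac)
  also have "\<dots> = (\<Sum>r\<in>UNIV. \<Sum>i\<in>UNIV. \<Sum>k\<in>UNIV. raise gi m r * (gi i k * c i k r))"
    by (rule sum_swap3)
  also have "\<dots> = (\<Sum>r\<in>UNIV. trace3 gi c r * raise gi m r)"
    unfolding trace3_def by (simp add: sum_distrib_left mult_ac)
  finally show ?thesis .
qed

definition S4_wrt :: "('n::finite \<Rightarrow> 'n \<Rightarrow> real) \<Rightarrow> ('n \<Rightarrow> 'n \<Rightarrow> 'n \<Rightarrow> real) \<Rightarrow> 'n \<Rightarrow> 'n \<Rightarrow> 'n \<Rightarrow> 'n \<Rightarrow> real" where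
  "S4_wrt gi c h i j k = (\<Sum>r\<in>UNIV. c i j r * (\<Sum>s\<in>UNIV. gi r s * c h k s) - c i k r * (\<Sum>s\<in>UNIV. gi r s * c h j s))"

definition S2_wrt :: "('n::finite \<Rightarrow> 'n \<Rightarrow> real) \<Rightarrow> ('n \<Rightarrow> 'n \<Rightarrow> 'n \<Rightarrow> real) \<Rightarrow> 'n \<Rightarrow> 'n \<Rightarrow> real" where
  "S2_wrt gi c i k = (\<Sum>h\<in>UNIV. \<Sum>j\<in>UNIV. gi h j * S4_wrt gi c h i j k)"

definition S0_wrt :: "('n::finite \<Rightarrow> 'n \<Rightarrow> real) \<Rightarrow> ('n \<Rightarrow> 'n \<Rightarrow> 'n \<Rightarrow> real) \<Rightarrow> real" where
  "S0_wrt gi c = (\<Sum>i\<in>UNIV. \<Sum>k\<in>UNIV. gi i k * S2_wrt gi c i k)"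

lemma S2_wrt_contr: "S2_wrt gi c i k = contr_cross gi c c i k - contr_trace gi c c i k"
  unfolding S2_wrt_def S4_wrt_def contr_cross_def contr_trace_def
  by (simp add: sum_distrib_left right_diff_distrib sum_subtractf mult_ac)

lemma indicatory_contract:
  assumes "symmetric3 d" "indicatory y d"
  shows "(\<Sum>a\<in>UNIV. y a * d a b s) = 0" "(\<Sum>a\<in>UNIV. y a * d b a s) = 0" "(\<Sum>a\<in>UNIV. y a * d b s a) = 0"
  using indicatoryD[OF assms, of b s] indicatoryD[OF assms, of s b]
  by (simp_all add: mult.commute)

lemma S4_wrt_indicatory:
  assumes sd: "symmetric3 d" and kd: "indicatory y d"
  shows "(\<Sum>a\<in>UNIV. y a * S4_wrt gi d a i j k) = 0"
    and "(\<Sum>a\<in>UNIV. y a * S4_wrt gi d h a j k) = 0"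
    and "(\<Sum>a\<in>UNIV. y a * S4_wrt gi d h i a k) = 0"
    and "(\<Sum>a\<in>UNIV. y a * S4_wrt gi d h i j a) = 0"
proof -
  note K = indicatory_contract[OF sd kd]
  have pull: "(\<Sum>a\<in>A. y a * (X * S a)) = X * (\<Sum>a\<in>A. y a * S a)"
    "(\<Sum>a\<in>A. y a * (S a * X)) = X * (\<Sum>a\<in>A. y a * S a)" for A and X :: real and S
    by (simp_all add: sum_distrib_left mult_ac)
  have diff: "(\<Sum>a\<in>UNIV. y a * (\<Sum>r\<in>UNIV. A a r * B a r - C a r * D a r)) = 0"
    if "\<And>r. (\<Sum>a\<in>UNIV. y a * (A a r * B a r)) = 0" "\<And>r. (\<Sum>a\<in>UNIV. y a * (C a r * D a r)) = 0"
    for A B C D :: "'a \<Rightarrow> 'a \<Rightarrow> real"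
    using that by (simp add: sum_mult_sum_swap right_diff_distrib sum_subtractf)
  have raise_pull: "(\<Sum>a\<in>UNIV. y a * (\<Sum>s\<in>UNIV. gi r s * X a s))
      = (\<Sum>s\<in>UNIV. gi r s * (\<Sum>a\<in>UNIV. y a * X a s))" for r and X :: "'a \<Rightarrow> 'a \<Rightarrow> real"
    by (subst sum_mult_sum_swap) (simp add: sum_distrib_left mult.left_commute)
  have R: "(\<Sum>a\<in>UNIV. y a * (\<Sum>s\<in>UNIV. gi r s * d a b s)) = 0"
          "(\<Sum>a\<in>UNIV. y a * (\<Sum>s\<in>UNIV. gi r s * d b a s)) = 0" for r b
    by (simp_all only: raise_pull K mult_zero_right sum.neutral_const)
  show "(\<Sum>a\<in>UNIV. y a * S4_wrt gi d a i j k) = 0" unfolding S4_wrt_def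
    by (rule diff) (simp_all only: pull R mult_zero_right)
  show "(\<Sum>a\<in>UNIV. y a * S4_wrt gi d h a j k) = 0" unfolding S4_wrt_def
    by (rule diff) (simp_all only: pull K mult_zero_right)
  show "(\<Sum>a\<in>UNIV. y a * S4_wrt gi d h i a k) = 0" unfolding S4_wrt_def
    by (rule diff) (simp_all only: pull K R mult_zero_right)
  show "(\<Sum>a\<in>UNIV. y a * S4_wrt gi d h i j a) = 0" unfolding S4_wrt_def
    by (rule diff) (simp_all only: pull K R mult_zero_right)
qed

lemma S2_wrt_indicatory:
  assumes "symmetric3 d" "indicatory y d"
  shows "(\<Sum>a\<in>UNIV. y a * S2_wrt gi d a k) = 0" "(\<Sum>a\<in>UNIV. y a * S2_wrt gi d i a) = 0"
proof -
  have pull: "(\<Sum>a\<in>UNIV. y a * (\<Sum>h\<in>UNIV. \<Sum>j\<in>UNIV. gi h j * X h j a))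
      = (\<Sum>h\<in>UNIV. \<Sum>j\<in>UNIV. gi h j * (\<Sum>a\<in>UNIV. y a * X h j a))" for X :: "'a \<Rightarrow> 'a \<Rightarrow> 'a \<Rightarrow> real"
    by (subst sum_mult_sum2_swap) (simp add: sum_distrib_left mult.left_commute)
  show "(\<Sum>a\<in>UNIV. y a * S2_wrt gi d a k) = 0"
    using pull[of "\<lambda>h j a. S4_wrt gi d h a j k"] by (simp add: S2_wrt_def S4_wrt_indicatory[OF assms])
  show "(\<Sum>a\<in>UNIV. y a * S2_wrt gi d i a) = 0"
    using pull[of "\<lambda>h j a. S4_wrt gi d h i j a"] by (simp add: S2_wrt_def S4_wrt_indicatory[OF assms])
qed

section \<open>The angular metric and symmetrised products\<close>

text \<open>
  In the application gi is g^ij, hh is the angular metric h_ij, y is the direction, w = l/L,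
  and m is any covector with m y = 0.
\<close>

locale angular_frame =
  fixes gi hh :: "'n::finite \<Rightarrow> 'n \<Rightarrow> real" and y w m :: "'n \<Rightarrow> real"
  assumes gi_sym: "\<And>a b. gi a b = gi b a" and h_sym: "\<And>a b. hh a b = hh b a"
  and ginv_angular: "\<And>a b. (\<Sum>j\<in>UNIV. gi a j * hh j b) = (if a = b then 1 else 0) - y a * w b"
  and angular_y: "\<And>a. (\<Sum>b\<in>UNIV. hh a b * y b) = 0"
  and m_y: "(\<Sum>a\<in>UNIV. m a * y a) = 0"
  and y_w: "(\<Sum>a\<in>UNIV. y a * w a) = 1"
begin

lemma contract_angular:
  assumes "(\<Sum>a\<in>UNIV. v a * y a) = 0"
  shows "(\<Sum>a\<in>UNIV. v a * (\<Sum>j\<in>UNIV. gi a j * hh j b)) = v b"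
  using sum_mult_delta_diff[of v b y "w b"] assms by (simp add: ginv_angular)

lemma angular_raise:
  assumes "(\<Sum>a\<in>UNIV. v a * y a) = 0"
  shows "(\<Sum>r\<in>UNIV. hh i r * raise gi v r) = v i"
proof -
  have "(\<Sum>r\<in>UNIV. hh i r * raise gi v r) = (\<Sum>r\<in>UNIV. \<Sum>s\<in>UNIV. hh i r * gi r s * v s)"
    unfolding raise_def by (simp add: sum_distrib_left ac_simps)
  also have "\<dots> = (\<Sum>s\<in>UNIV. \<Sum>r\<in>UNIV. hh i r * gi r s * v s)" by (rule sum.swap)
  also have "\<dots> = (\<Sum>s\<in>UNIV. v s * (\<Sum>r\<in>UNIV. gi s r * hh r i))"
    by (simp add: sum_distrib_left ac_simps gi_sym h_sym)
  also have "\<dots> = v i" by (rule contract_angular[OF assms])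
  finally show ?thesis .
qed

lemma trace_angular: "(\<Sum>h\<in>UNIV. \<Sum>j\<in>UNIV. gi h j * hh j h) = real CARD('n) - 1"
proof -
  have "(\<Sum>h\<in>UNIV. \<Sum>j\<in>UNIV. gi h j * hh j h) = (\<Sum>h\<in>UNIV. 1 - y h * w h)"
    by (simp add: ginv_angular)
  also have "\<dots> = real CARD('n) - 1" by (simp add: sum_subtractf y_w)
  finally show ?thesis .
qed

lemma ginv_angular_ginv: "(\<Sum>h\<in>UNIV. \<Sum>s\<in>UNIV. gi h j * gi r s * hh h s) = gi r j - y j * (\<Sum>s\<in>UNIV. gi r s * w s)"
proof -
  have "(\<Sum>h\<in>UNIV. \<Sum>s\<in>UNIV. gi h j * gi r s * hh h s) = (\<Sum>s\<in>UNIV. \<Sum>h\<in>UNIV. gi h j * gi r s * hh h s)"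
    by (rule sum.swap)
  also have "\<dots> = (\<Sum>s\<in>UNIV. gi r s * (\<Sum>h\<in>UNIV. gi j h * hh h s))"
    by (simp add: sum_distrib_left ac_simps gi_sym)
  also have "\<dots> = (\<Sum>s\<in>UNIV. gi r s * ((if j = s then 1 else 0) - y j * w s))"
    by (simp add: ginv_angular)
  also have "\<dots> = (\<Sum>s\<in>UNIV. (if s = j then gi r s else 0) - y j * (gi r s * w s))"
    by (rule sum.cong) (auto simp: algebra_simps)
  also have "\<dots> = gi r j - y j * (\<Sum>s\<in>UNIV. gi r s * w s)"
    by (simp add: sum_subtractf sum_distrib_left)
  finally show ?thesis .
qed

lemma raise12_sym_prod:
  "raise12 gi (sym_prod hh m) j r k = ((if j = k then 1 else 0) - y j * w k) * raise gi m r
     + (gi r j - y j * (\<Sum>s\<in>UNIV. gi r s * w s)) * m k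
     + ((if r = k then 1 else 0) - y r * w k) * raise gi m j"
proof -
  have "raise12 gi (sym_prod hh m) j r k =
      (\<Sum>h\<in>UNIV. \<Sum>s\<in>UNIV. gi h j * gi r s * hh h k * m s)
    + (\<Sum>h\<in>UNIV. \<Sum>s\<in>UNIV. gi h j * gi r s * hh h s) * m k
    + (\<Sum>h\<in>UNIV. \<Sum>s\<in>UNIV. gi h j * gi r s * hh k s * m h)"
    unfolding raise12_def sym_prod_def by (simp add: algebra_simps sum.distrib sum_distrib_right sum_distrib_left)
  also have "(\<Sum>h\<in>UNIV. \<Sum>s\<in>UNIV. gi h j * gi r s * hh h k * m s)
     = (\<Sum>h\<in>UNIV. \<Sum>s\<in>UNIV. (gi j h * hh h k) * (gi r s * m s))"
    by (intro sum.cong refl) (subst gi_sym, simp add: mult_ac)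
  also have "\<dots> = (\<Sum>h\<in>UNIV. gi j h * hh h k) * raise gi m r"
    by (simp only: raise_def sum_product)
  also have "(\<Sum>h\<in>UNIV. \<Sum>s\<in>UNIV. gi h j * gi r s * hh k s * m h)
     = (\<Sum>h\<in>UNIV. \<Sum>s\<in>UNIV. (gi j h * m h) * (gi r s * hh s k))"
    by (intro sum.cong refl) (subst gi_sym, subst h_sym, simp add: mult_ac)
  also have "\<dots> = (\<Sum>s\<in>UNIV. gi r s * hh s k) * raise gi m j"
    by (simp only: raise_def sum_product mult.commute)
  finally show ?thesis by (simp add: ginv_angular ginv_angular_ginv)
qed

lemma symmetric3_sym_prod: "symmetric3 (sym_prod hh m)"
  unfolding symmetric3_def sym_prod_def by (auto simp: h_sym algebra_simps)

lemma indicatory_sym_prod: "indicatory y (sym_prod hh m)"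
proof -
  have "(\<Sum>r\<in>UNIV. sym_prod hh m i j r * y r) = 0" for i j
  proof -
    have "(\<Sum>r\<in>UNIV. sym_prod hh m i j r * y r) = hh i j * (\<Sum>r\<in>UNIV. m r * y r) + m j * (\<Sum>r\<in>UNIV. hh i r * y r)
       + m i * (\<Sum>r\<in>UNIV. hh j r * y r)"
      unfolding sym_prod_def by (simp add: algebra_simps sum.distrib sum_distrib_left)
    then show ?thesis by (simp add: angular_y m_y)
  qed
  then show ?thesis unfolding indicatory_def by blast
qed

lemma trace3_indicatory_shift:
  assumes sd: "symmetric3 d" and kd: "indicatory y d"
  shows "(\<Sum>j\<in>UNIV. \<Sum>r\<in>UNIV. d i j r * (gi r j - y j * W r)) = trace3 gi d i"
proof -
  have "(\<Sum>j\<in>UNIV. \<Sum>r\<in>UNIV. d i j r * (gi r j - y j * W r))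
     = (\<Sum>j\<in>UNIV. \<Sum>r\<in>UNIV. d i j r * gi r j) - (\<Sum>j\<in>UNIV. \<Sum>r\<in>UNIV. d i j r * y j * W r)"
    by (simp add: right_diff_distrib sum_subtractf mult_ac)
  also have "(\<Sum>j\<in>UNIV. \<Sum>r\<in>UNIV. d i j r * y j * W r) = (\<Sum>r\<in>UNIV. \<Sum>j\<in>UNIV. d i j r * y j * W r)"
    by (rule sum.swap)
  also have "\<dots> = (\<Sum>r\<in>UNIV. W r * (\<Sum>j\<in>UNIV. d i j r * y j))"
    by (simp only: sum_distrib_left mult_ac)
  also have "\<dots> = 0" by (simp add: indicatoryD(2)[OF sd kd])
  also have "(\<Sum>j\<in>UNIV. \<Sum>r\<in>UNIV. d i j r * gi r j) = trace3 gi d i"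
    unfolding trace3_def
    by (intro sum.cong refl) (metis gi_sym symmetric3D(4)[OF sd] mult.commute)
  finally show ?thesis by simp
qed

lemma contr_cross_sym_prod:
  assumes sd: "symmetric3 d" and kd: "indicatory y d"
  shows "contr_cross gi d (sym_prod hh m) i k = 2 * transvect gi d m i k + m k * trace3 gi d i"
proof -
  define W where "W r = (\<Sum>s\<in>UNIV. gi r s * w s)" for r
  have "contr_cross gi d (sym_prod hh m) i k = (\<Sum>j\<in>UNIV. \<Sum>r\<in>UNIV. d i j r * ((if j = k then 1 else 0) - y j * w k) * raise gi m r)
     + m k * (\<Sum>j\<in>UNIV. \<Sum>r\<in>UNIV. d i j r * (gi r j - y j * W r))
     + (\<Sum>j\<in>UNIV. \<Sum>r\<in>UNIV. d i j r * ((if r = k then 1 else 0) - y r * w k) * raise gi m j)"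
    unfolding contr_cross_raise12 raise12_sym_prod W_def by (simp only: distrib_left sum.distrib sum_distrib_left mult_ac)
  also have "(\<Sum>j\<in>UNIV. \<Sum>r\<in>UNIV. d i j r * ((if j = k then 1 else 0) - y j * w k) * raise gi m r)
      = transvect gi d m i k"
  proof -
    have "(\<Sum>j\<in>UNIV. \<Sum>r\<in>UNIV. d i j r * ((if j = k then 1 else 0) - y j * w k) * raise gi m r)
        = (\<Sum>r\<in>UNIV. \<Sum>j\<in>UNIV. d i j r * ((if j = k then 1 else 0) - y j * w k) * raise gi m r)"
      by (rule sum.swap)
    also have "\<dots> = (\<Sum>r\<in>UNIV. raise gi m r * (\<Sum>j\<in>UNIV. d i j r * ((if j = k then 1 else 0) - y j * w k)))"
      by (simp only: sum_distrib_left mult_ac)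
    also have "\<dots> = (\<Sum>r\<in>UNIV. raise gi m r * d i k r)"
      by (simp add: sum_mult_delta_diff indicatoryD(2)[OF sd kd])
    finally show ?thesis unfolding transvect_def by (simp add: mult_ac)
  qed
  also have "(\<Sum>j\<in>UNIV. \<Sum>r\<in>UNIV. d i j r * (gi r j - y j * W r)) = trace3 gi d i"
    by (rule trace3_indicatory_shift[OF sd kd])
  also have "(\<Sum>j\<in>UNIV. \<Sum>r\<in>UNIV. d i j r * ((if r = k then 1 else 0) - y r * w k) * raise gi m j)
      = transvect gi d m i k"
  proof -
    have "(\<Sum>j\<in>UNIV. \<Sum>r\<in>UNIV. d i j r * ((if r = k then 1 else 0) - y r * w k) * raise gi m j)
       = (\<Sum>j\<in>UNIV. raise gi m j * (\<Sum>r\<in>UNIV. d i j r * ((if r = k then 1 else 0) - y r * w k)))"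
      by (simp only: sum_distrib_left mult_ac)
    also have "\<dots> = (\<Sum>j\<in>UNIV. raise gi m j * d i j k)"
      by (simp add: sum_mult_delta_diff indicatoryD(1)[OF sd kd])
    finally show ?thesis unfolding transvect_def
      by (metis (no_types, lifting) sum.cong symmetric3D(2)[OF sd] mult.commute)
  qed
  finally show ?thesis by simp
qed

lemma contr_cross_swap:
  assumes sd: "symmetric3 d" and se: "symmetric3 e"
  shows "contr_cross gi d e i k = contr_cross gi e d k i"
proof -
  have "contr_cross gi e d k i = (\<Sum>j\<in>UNIV. \<Sum>h\<in>UNIV. \<Sum>s\<in>UNIV. \<Sum>r\<in>UNIV. gi h j * gi r s * d i j r * e h k s)"
  proof -
    have "gi j h * gi s r * e k h s * d j i r = gi h j * gi r s * d i j r * e h k s" for h j r s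
      using gi_sym[of j h] gi_sym[of s r] symmetric3D(1)[OF se, of k h s] symmetric3D(1)[OF sd, of j i r]
      by (simp add: mult_ac)
    then show ?thesis unfolding contr_cross_def by simp
  qed
  also have "\<dots> = (\<Sum>h\<in>UNIV. \<Sum>j\<in>UNIV. \<Sum>s\<in>UNIV. \<Sum>r\<in>UNIV. gi h j * gi r s * d i j r * e h k s)"
    by (rule sum.swap)
  also have "\<dots> = contr_cross gi d e i k"
    unfolding contr_cross_def by (rule sum.cong[OF refl], rule sum.cong[OF refl], rule sum.swap)
  finally show ?thesis by simp
qed

lemma trace3_sym_prod: "trace3 gi (sym_prod hh m) s = (real CARD('n) + 1) * m s"
proof -
  have "trace3 gi (sym_prod hh m) s = m s * (\<Sum>h\<in>UNIV. \<Sum>j\<in>UNIV. gi h j * hh j h)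
     + (\<Sum>h\<in>UNIV. \<Sum>j\<in>UNIV. gi h j * hh h s * m j) + (\<Sum>h\<in>UNIV. \<Sum>j\<in>UNIV. gi h j * hh j s * m h)"
    unfolding trace3_def sym_prod_def by (simp add: algebra_simps sum.distrib sum_distrib_left h_sym)
  also have "(\<Sum>h\<in>UNIV. \<Sum>j\<in>UNIV. gi h j * hh h s * m j) = (\<Sum>j\<in>UNIV. \<Sum>h\<in>UNIV. gi h j * hh h s * m j)"
    by (rule sum.swap)
  also have "\<dots> = (\<Sum>j\<in>UNIV. m j * (\<Sum>h\<in>UNIV. gi j h * hh h s))"
    by (simp only: sum_distrib_left) (intro sum.cong refl, subst gi_sym, simp add: mult_ac)
  also have "\<dots> = m s" by (rule contract_angular[OF m_y])
  also have "(\<Sum>h\<in>UNIV. \<Sum>j\<in>UNIV. gi h j * hh j s * m h) = (\<Sum>h\<in>UNIV. m h * (\<Sum>j\<in>UNIV. gi h j * hh j s))"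
    by (simp add: sum_distrib_left mult_ac)
  also have "\<dots> = m s" by (rule contract_angular[OF m_y])
  finally show ?thesis by (simp add: trace_angular algebra_simps)
qed

lemma transvect_sym_prod:
  assumes "(\<Sum>a\<in>UNIV. v a * y a) = 0"
  shows "transvect gi (sym_prod hh m) v i k = hh i k * (\<Sum>r\<in>UNIV. m r * raise gi v r) + m k * v i + m i * v k"
proof -
  have "transvect gi (sym_prod hh m) v i k = hh i k * (\<Sum>r\<in>UNIV. m r * raise gi v r)
     + m k * (\<Sum>r\<in>UNIV. hh i r * raise gi v r) + m i * (\<Sum>r\<in>UNIV. hh k r * raise gi v r)"
    unfolding transvect_def sym_prod_def by (simp add: algebra_simps sum.distrib sum_distrib_left)
  then show ?thesis by (simp add: angular_raise[OF assms])
qed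

lemma contr_trace_sym_prod: "contr_trace gi d (sym_prod hh m) i k = (real CARD('n) + 1) * transvect gi d m i k"
  unfolding contr_trace_trace3 transvect_def raise_def trace3_sym_prod by (simp add: sum_distrib_left mult_ac)

lemma raise_swap: "(\<Sum>r\<in>UNIV. u r * raise gi v r) = (\<Sum>r\<in>UNIV. v r * raise gi u r)"
proof -
  have "(\<Sum>r\<in>UNIV. u r * raise gi v r) = (\<Sum>r\<in>UNIV. \<Sum>s\<in>UNIV. u r * gi r s * v s)"
    unfolding raise_def by (simp add: sum_distrib_left mult_ac)
  also have "\<dots> = (\<Sum>s\<in>UNIV. \<Sum>r\<in>UNIV. u r * gi r s * v s)" by (rule sum.swap)
  also have "\<dots> = (\<Sum>r\<in>UNIV. v r * raise gi u r)"
    unfolding raise_def by (simp only: sum_distrib_left) (intro sum.cong refl, subst gi_sym, simp add: mult_ac)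
  finally show ?thesis .
qed

lemma S2_wrt_perturb:
  assumes sc: "symmetric3 c" and kc: "indicatory y c"
  shows "S2_wrt gi (\<lambda>a b e. c a b e + \<kappa> * sym_prod hh m a b e) i k
     = S2_wrt gi c i k
       + \<kappa> * ((3 - real CARD('n)) * transvect gi c m i k - hh i k * (\<Sum>r\<in>UNIV. trace3 gi c r * raise gi m r))
       + \<kappa>^2 * ((1 - real CARD('n)) * (\<Sum>r\<in>UNIV. m r * raise gi m r) * hh i k
                 + (3 - real CARD('n)) * m i * m k)"
proof -
  let ?n = "real CARD('n)"
  let ?C = "trace3 gi c"
  let ?m2 = "(\<Sum>r\<in>UNIV. m r * raise gi m r)"
  have e1: "contr_cross gi (\<lambda>a b e. c a b e + \<kappa> * sym_prod hh m a b e) (\<lambda>a b e. c a b e + \<kappa> * sym_prod hh m a b e) i k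
     = contr_cross gi c c i k + \<kappa> * contr_cross gi c (sym_prod hh m) i k + \<kappa> * contr_cross gi (sym_prod hh m) c i k + \<kappa>^2 * contr_cross gi (sym_prod hh m) (sym_prod hh m) i k"
    unfolding contr_cross_def by (simp add: algebra_simps sum.distrib sum_distrib_left power2_eq_square)
  have e2: "contr_trace gi (\<lambda>a b e. c a b e + \<kappa> * sym_prod hh m a b e) (\<lambda>a b e. c a b e + \<kappa> * sym_prod hh m a b e) i k
     = contr_trace gi c c i k + \<kappa> * contr_trace gi c (sym_prod hh m) i k + \<kappa> * contr_trace gi (sym_prod hh m) c i k + \<kappa>^2 * contr_trace gi (sym_prod hh m) (sym_prod hh m) i k"
    unfolding contr_trace_def by (simp add: algebra_simps sum.distrib sum_distrib_left power2_eq_square)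
  have a1: "contr_cross gi c (sym_prod hh m) i k = 2 * transvect gi c m i k + m k * ?C i"
    by (rule contr_cross_sym_prod[OF sc kc])
  have a2: "contr_cross gi (sym_prod hh m) c i k = 2 * transvect gi c m i k + m i * ?C k"
  proof -
    have "contr_cross gi (sym_prod hh m) c i k = contr_cross gi c (sym_prod hh m) k i" by (rule contr_cross_swap[OF symmetric3_sym_prod sc])
    also have "\<dots> = 2 * transvect gi c m k i + m i * ?C k" by (rule contr_cross_sym_prod[OF sc kc])
    also have "transvect gi c m k i = transvect gi c m i k" unfolding transvect_def using symmetric3D(1)[OF sc] by simp
    finally show ?thesis .
  qed
  have a3: "contr_trace gi c (sym_prod hh m) i k = (?n + 1) * transvect gi c m i k" by (rule contr_trace_sym_prod)
  have a4: "contr_trace gi (sym_prod hh m) c i k = hh i k * (\<Sum>r\<in>UNIV. ?C r * raise gi m r) + m k * ?C i + m i * ?C k"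
  proof -
    have "contr_trace gi (sym_prod hh m) c i k = transvect gi (sym_prod hh m) ?C i k" unfolding contr_trace_trace3 transvect_def ..
    also have "\<dots> = hh i k * (\<Sum>r\<in>UNIV. m r * raise gi ?C r) + m k * ?C i + m i * ?C k"
      by (rule transvect_sym_prod[OF trace3_indicatory[OF kc]])
    finally show ?thesis by (simp add: raise_swap)
  qed
  have a5: "contr_cross gi (sym_prod hh m) (sym_prod hh m) i k = 2 * (hh i k * ?m2 + m k * m i + m i * m k) + m k * ((?n + 1) * m i)"
    by (simp add: contr_cross_sym_prod[OF symmetric3_sym_prod indicatory_sym_prod] transvect_sym_prod[OF m_y] trace3_sym_prod)
  have a6: "contr_trace gi (sym_prod hh m) (sym_prod hh m) i k = (?n + 1) * (hh i k * ?m2 + m k * m i + m i * m k)"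
    by (simp add: contr_trace_sym_prod transvect_sym_prod[OF m_y])
  show ?thesis unfolding S2_wrt_contr e1 e2 a1 a2 a3 a4 a5 a6 by (simp add: algebra_simps power2_eq_square)
qed

lemma trace_S2_perturb:
  "(\<Sum>i\<in>UNIV. \<Sum>k\<in>UNIV. gi i k * (A i k
       + \<kappa> * ((3 - real CARD('n)) * transvect gi c m i k - hh i k * (\<Sum>r\<in>UNIV. trace3 gi c r * raise gi m r))
       + \<kappa>^2 * ((1 - real CARD('n)) * (\<Sum>r\<in>UNIV. m r * raise gi m r) * hh i k
                 + (3 - real CARD('n)) * m i * m k)))
   = (\<Sum>i\<in>UNIV. \<Sum>k\<in>UNIV. gi i k * A i k)
     + \<kappa> * ((3 - real CARD('n)) - (real CARD('n) - 1)) * (\<Sum>r\<in>UNIV. trace3 gi c r * raise gi m r)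
     + \<kappa>^2 * ((1 - real CARD('n)) * (real CARD('n) - 1) + (3 - real CARD('n))) * (\<Sum>r\<in>UNIV. m r * raise gi m r)"
proof -
  let ?n = "real CARD('n)"
  let ?CM = "(\<Sum>r\<in>UNIV. trace3 gi c r * raise gi m r)"
  let ?m2 = "(\<Sum>r\<in>UNIV. m r * raise gi m r)"
  have t1: "(\<Sum>i\<in>UNIV. \<Sum>k\<in>UNIV. gi i k * transvect gi c m i k) = ?CM"
    by (rule trace_transvect)
  have t2: "(\<Sum>i\<in>UNIV. \<Sum>k\<in>UNIV. gi i k * hh i k) = ?n - 1"
    using trace_angular by (simp add: h_sym)
  have t3: "(\<Sum>i\<in>UNIV. \<Sum>k\<in>UNIV. gi i k * (m i * m k)) = ?m2"
    unfolding raise_def by (simp add: sum_distrib_left mult_ac)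
  have "(\<Sum>i\<in>UNIV. \<Sum>k\<in>UNIV. gi i k * (A i k
       + \<kappa> * ((3 - ?n) * transvect gi c m i k - hh i k * ?CM)
       + \<kappa>^2 * ((1 - ?n) * ?m2 * hh i k + (3 - ?n) * m i * m k)))
     = (\<Sum>i\<in>UNIV. \<Sum>k\<in>UNIV. gi i k * A i k
       + (\<kappa> * (3 - ?n)) * (gi i k * transvect gi c m i k)
       - (\<kappa> * ?CM) * (gi i k * hh i k)
       + (\<kappa>^2 * (1 - ?n) * ?m2) * (gi i k * hh i k)
       + (\<kappa>^2 * (3 - ?n)) * (gi i k * (m i * m k)))"
    by (intro sum.cong refl) (simp add: algebra_simps)
  also have "\<dots> = (\<Sum>i\<in>UNIV. \<Sum>k\<in>UNIV. gi i k * A i k)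
       + \<kappa> * (3 - ?n) * (\<Sum>i\<in>UNIV. \<Sum>k\<in>UNIV. gi i k * transvect gi c m i k)
       - \<kappa> * ?CM * (\<Sum>i\<in>UNIV. \<Sum>k\<in>UNIV. gi i k * hh i k)
       + \<kappa>^2 * (1 - ?n) * ?m2 * (\<Sum>i\<in>UNIV. \<Sum>k\<in>UNIV. gi i k * hh i k)
       + \<kappa>^2 * (3 - ?n) * (\<Sum>i\<in>UNIV. \<Sum>k\<in>UNIV. gi i k * (m i * m k))"
    by (simp only: sum.distrib sum_subtractf sum_distrib_left[symmetric])
  also have "\<dots> = (\<Sum>i\<in>UNIV. \<Sum>k\<in>UNIV. gi i k * A i k)
     + \<kappa> * ((3 - ?n) - (?n - 1)) * ?CM + \<kappa>^2 * ((1 - ?n) * (?n - 1) + (3 - ?n)) * ?m2"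
    unfolding t1 t2 t3 by (simp add: algebra_simps)
  finally show ?thesis .
qed

lemma S0_wrt_perturb:
  assumes "symmetric3 c" and "indicatory y c"
  shows "S0_wrt gi (\<lambda>a b e. c a b e + \<kappa> * sym_prod hh m a b e)
     = S0_wrt gi c - 2 * (real CARD('n) - 2) * \<kappa> * (\<Sum>r\<in>UNIV. trace3 gi c r * raise gi m r)
       - (real CARD('n) + 1) * (real CARD('n) - 2) * \<kappa>^2 * (\<Sum>r\<in>UNIV. m r * raise gi m r)"
  unfolding S0_wrt_def S2_wrt_perturb[OF assms] trace_S2_perturb by (simp add: algebra_simps)

end

section \<open>Inverting a rank-one perturbation of a multiple of the angular metric\<close>

text \<open>
  In the application gs, gis, gi are *g_ij, *g^ij, g^ij, and l, ls, F, Fs are l_i, *l_i, L, *L at y.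
\<close>

locale scaled_inverse =
  fixes gs gis gi hh :: "'n::finite \<Rightarrow> 'n \<Rightarrow> real" and y l ls :: "'n \<Rightarrow> real" and p F Fs :: real
  assumes gis_gs: "\<And>a b. (\<Sum>k\<in>UNIV. gis a k * gs k b) = (if a = b then 1 else 0)"
  and gs_eq: "\<And>a b. gs a b = p * hh a b + ls a * ls b"
  and angular_ginv: "\<And>k j. (\<Sum>m\<in>UNIV. hh k m * gi m j) = (if k = j then 1 else 0) - l k * y j / F"
  and gs_y: "\<And>k. (\<Sum>m\<in>UNIV. gs k m * y m) = Fs * ls k"
  and p_nonzero: "p \<noteq> 0" and Fs_nonzero: "Fs \<noteq> 0"
begin

lemma gis_ls: "(\<Sum>k\<in>UNIV. gis h k * ls k) = y h / Fs"
proof -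
  have "(\<Sum>k\<in>UNIV. gis h k * ls k) = (\<Sum>k\<in>UNIV. gis h k * (\<Sum>m\<in>UNIV. gs k m * y m)) / Fs"
    using Fs_nonzero by (simp add: gs_y sum_divide_distrib)
  also have "(\<Sum>k\<in>UNIV. gis h k * (\<Sum>m\<in>UNIV. gs k m * y m)) = (\<Sum>m\<in>UNIV. \<Sum>k\<in>UNIV. gis h k * (gs k m * y m))"
    by (rule sum_mult_sum_swap)
  also have "\<dots> = (\<Sum>m\<in>UNIV. (\<Sum>k\<in>UNIV. gis h k * gs k m) * y m)"
    by (simp add: sum_distrib_right sum_distrib_left mult_ac)
  also have "\<dots> = (\<Sum>m\<in>UNIV. if h = m then y m else 0)"
    by (rule sum.cong) (auto simp: gis_gs)
  also have "\<dots> = y h" by simp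
  finally show ?thesis .
qed

lemma ginv_expansion:
  "gi h j = p * gis h j - p * (\<Sum>k\<in>UNIV. gis h k * l k) * y j / F + (y h / Fs) * (\<Sum>m\<in>UNIV. ls m * gi m j)"
proof -
  define G where "G = (\<Sum>m\<in>UNIV. ls m * gi m j)"
  have gsgi: "(\<Sum>m\<in>UNIV. gs k m * gi m j) = p * ((if k = j then 1 else 0) - l k * y j / F) + ls k * G" for k
  proof -
    have "(\<Sum>m\<in>UNIV. gs k m * gi m j) = p * (\<Sum>m\<in>UNIV. hh k m * gi m j) + ls k * G"
      unfolding gs_eq G_def by (simp add: algebra_simps sum.distrib sum_distrib_left)
    then show ?thesis by (simp add: angular_ginv)
  qed
  have "gi h j = (\<Sum>m\<in>UNIV. if h = m then gi m j else 0)" by simp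
  also have "\<dots> = (\<Sum>m\<in>UNIV. (\<Sum>k\<in>UNIV. gis h k * gs k m) * gi m j)"
    by (rule sum.cong) (auto simp: gis_gs)
  also have "\<dots> = (\<Sum>m\<in>UNIV. \<Sum>k\<in>UNIV. gis h k * (gs k m * gi m j))"
    by (simp add: sum_distrib_right sum_distrib_left mult_ac)
  also have "\<dots> = (\<Sum>k\<in>UNIV. gis h k * (\<Sum>m\<in>UNIV. gs k m * gi m j))"
    by (subst sum.swap) (simp add: sum_distrib_left)
  also have "\<dots> = (\<Sum>k\<in>UNIV. gis h k * (p * ((if k = j then 1 else 0) - l k * y j / F) + ls k * G))"
    by (simp add: gsgi)
  also have "\<dots> = (\<Sum>k\<in>UNIV. (if k = j then p * gis h k else 0) - (p * y j / F) * (gis h k * l k) + G * (gis h k * ls k))"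
    by (rule sum.cong) (auto simp: algebra_simps)
  also have "\<dots> = p * gis h j - (p * y j / F) * (\<Sum>k\<in>UNIV. gis h k * l k) + G * (\<Sum>k\<in>UNIV. gis h k * ls k)"
    by (simp add: sum.distrib sum_subtractf sum_distrib_left)
  finally show ?thesis unfolding gis_ls G_def by (simp add: algebra_simps)
qed

lemma contract2_scaled_inverse:
  assumes T1: "\<And>h. (\<Sum>j\<in>UNIV. T h j * y j) = 0" and T2: "\<And>j. (\<Sum>h\<in>UNIV. y h * T h j) = 0"
  shows "(\<Sum>h\<in>UNIV. \<Sum>j\<in>UNIV. gis h j * T h j) = (\<Sum>h\<in>UNIV. \<Sum>j\<in>UNIV. gi h j * T h j) / p"
proof -
  define z where "z h = (\<Sum>k\<in>UNIV. gis h k * l k)" for h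
  define G where "G j = (\<Sum>m\<in>UNIV. ls m * gi m j)" for j
  have "(\<Sum>h\<in>UNIV. \<Sum>j\<in>UNIV. gi h j * T h j)
      = (\<Sum>h\<in>UNIV. \<Sum>j\<in>UNIV. p * (gis h j * T h j) - (p / F * z h) * (T h j * y j) + (G j / Fs) * (y h * T h j))"
    by (intro sum.cong refl) (subst ginv_expansion, simp add: z_def G_def algebra_simps)
  also have "\<dots> = p * (\<Sum>h\<in>UNIV. \<Sum>j\<in>UNIV. gis h j * T h j)
      - (\<Sum>h\<in>UNIV. (p / F * z h) * (\<Sum>j\<in>UNIV. T h j * y j))
      + (\<Sum>h\<in>UNIV. \<Sum>j\<in>UNIV. (G j / Fs) * (y h * T h j))"
    by (simp add: sum.distrib sum_subtractf sum_distrib_left)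
  also have "(\<Sum>h\<in>UNIV. \<Sum>j\<in>UNIV. (G j / Fs) * (y h * T h j)) = (\<Sum>j\<in>UNIV. (G j / Fs) * (\<Sum>h\<in>UNIV. y h * T h j))"
    by (subst sum.swap) (simp add: sum_distrib_left)
  finally show ?thesis using p_nonzero by (simp add: T1 T2)
qed

lemma bilinear_scaled_inverse:
  assumes A: "(\<Sum>r\<in>UNIV. A r * y r) = 0" and B: "(\<Sum>r\<in>UNIV. B r * y r) = 0"
  shows "(\<Sum>r\<in>UNIV. A r * (\<Sum>s\<in>UNIV. gis r s * B s)) = (\<Sum>r\<in>UNIV. A r * (\<Sum>s\<in>UNIV. gi r s * B s)) / p"
proof -
  have "(\<Sum>r\<in>UNIV. \<Sum>s\<in>UNIV. gis r s * (A r * B s)) = (\<Sum>r\<in>UNIV. \<Sum>s\<in>UNIV. gi r s * (A r * B s)) / p"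
  proof (rule contract2_scaled_inverse)
    show "(\<Sum>s\<in>UNIV. A r * B s * y s) = 0" for r
      using B by (simp add: sum_distrib_left[symmetric] mult.assoc del: sum_distrib_left)
    show "(\<Sum>r\<in>UNIV. y r * (A r * B s)) = 0" for s
    proof -
      have "(\<Sum>r\<in>UNIV. y r * (A r * B s)) = B s * (\<Sum>r\<in>UNIV. A r * y r)"
        by (simp add: sum_distrib_left mult_ac)
      then show ?thesis using A by simp
    qed
  qed
  then show ?thesis by (simp add: sum_distrib_left mult_ac)
qed

lemma S4_wrt_scaled:
  fixes cs dd :: "'n \<Rightarrow> 'n \<Rightarrow> 'n \<Rightarrow> real"
  assumes cs: "\<And>a b e. cs a b e = p * dd a b e" and kd: "indicatory y dd"
  shows "S4_wrt gis cs h a j b = p * S4_wrt gi dd h a j b"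
proof -
  have kc: "(\<Sum>r\<in>UNIV. cs a b r * y r) = 0" for a b
    using kd unfolding indicatory_def
    by (simp add: cs mult.assoc sum_distrib_left[symmetric] del: sum_distrib_left)
  have pp: "(\<Sum>r\<in>UNIV. cs a' b' r * (\<Sum>s\<in>UNIV. gi r s * cs h' j' s))
      = p * p * (\<Sum>r\<in>UNIV. dd a' b' r * (\<Sum>s\<in>UNIV. gi r s * dd h' j' s))" for a' b' h' j'
    unfolding cs by (simp add: sum_distrib_left mult_ac)
  have "S4_wrt gis cs h a j b = (\<Sum>r\<in>UNIV. cs a j r * (\<Sum>s\<in>UNIV. gis r s * cs h b s))
      - (\<Sum>r\<in>UNIV. cs a b r * (\<Sum>s\<in>UNIV. gis r s * cs h j s))"
    unfolding S4_wrt_def by (simp add: sum_subtractf)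
  also have "\<dots> = (\<Sum>r\<in>UNIV. cs a j r * (\<Sum>s\<in>UNIV. gi r s * cs h b s)) / p
      - (\<Sum>r\<in>UNIV. cs a b r * (\<Sum>s\<in>UNIV. gi r s * cs h j s)) / p"
    by (simp add: bilinear_scaled_inverse kc)
  also have "\<dots> = p * ((\<Sum>r\<in>UNIV. dd a j r * (\<Sum>s\<in>UNIV. gi r s * dd h b s))
      - (\<Sum>r\<in>UNIV. dd a b r * (\<Sum>s\<in>UNIV. gi r s * dd h j s)))"
    unfolding pp using p_nonzero by (simp add: field_simps)
  also have "\<dots> = p * S4_wrt gi dd h a j b"
    unfolding S4_wrt_def by (simp add: sum_subtractf)
  finally show ?thesis .
qed

lemma S2_S0_wrt_scaled:
  fixes cs dd :: "'n \<Rightarrow> 'n \<Rightarrow> 'n \<Rightarrow> real"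
  assumes cs: "\<And>a b e. cs a b e = p * dd a b e" and sd: "symmetric3 dd" and kd: "indicatory y dd"
  shows "S2_wrt gis cs i k = S2_wrt gi dd i k" and "S0_wrt gis cs = S0_wrt gi dd / p"
proof -
  show S2: "S2_wrt gis cs i k = S2_wrt gi dd i k" for i k
  proof -
    have "S2_wrt gis cs i k = (\<Sum>h\<in>UNIV. \<Sum>j\<in>UNIV. gis h j * (p * S4_wrt gi dd h i j k))"
      unfolding S2_wrt_def S4_wrt_scaled[OF cs kd] ..
    also have "\<dots> = (\<Sum>h\<in>UNIV. \<Sum>j\<in>UNIV. gi h j * (p * S4_wrt gi dd h i j k)) / p"
    proof (rule contract2_scaled_inverse)
      show "(\<Sum>j\<in>UNIV. p * S4_wrt gi dd h i j k * y j) = 0" for h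
        using S4_wrt_indicatory(3)[OF sd kd, of gi h i k]
        by (simp add: sum_distrib_left[symmetric] mult_ac del: sum_distrib_left)
      show "(\<Sum>h\<in>UNIV. y h * (p * S4_wrt gi dd h i j k)) = 0" for j
        using S4_wrt_indicatory(1)[OF sd kd, of gi i j k]
        by (simp add: sum_distrib_left[symmetric] mult_ac del: sum_distrib_left)
    qed
    also have "\<dots> = S2_wrt gi dd i k"
      unfolding S2_wrt_def using p_nonzero by (simp add: sum_distrib_left[symmetric] mult_ac del: sum_distrib_left)
    finally show ?thesis .
  qed
  show "S0_wrt gis cs = S0_wrt gi dd / p"
    unfolding S0_wrt_def S2
  proof (rule contract2_scaled_inverse)
    show "(\<Sum>j\<in>UNIV. S2_wrt gi dd h j * y j) = 0" for h
      using S2_wrt_indicatory(2)[OF sd kd, of gi h] by (simp add: mult_ac)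
    show "(\<Sum>h\<in>UNIV. y h * S2_wrt gi dd h j) = 0" for j
      using S2_wrt_indicatory(1)[OF sd kd, of gi j] by simp
  qed
qed

end

section \<open>Inverse of the fundamental tensor\<close>

lemma matrix_inv_both:
  fixes A :: "'a::semiring_1^'n::finite^'n"
  assumes "invertible A"
  shows "A ** matrix_inv A = mat 1" "matrix_inv A ** A = mat 1"
  using someI_ex[OF assms[unfolded invertible_def]] unfolding matrix_inv_def by auto

lemma symmetric_matrix_inv:
  fixes A :: "'a::comm_semiring_1^'n::finite^'n"
  assumes "invertible A" "transpose A = A"
  shows "transpose (matrix_inv A) = matrix_inv A"
proof -
  note I = matrix_inv_both[OF assms(1)]
  have "transpose (matrix_inv A) ** A = mat 1"
    by (metis I(1) assms(2) matrix_transpose_mul transpose_mat)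
  then have "transpose (matrix_inv A) = transpose (matrix_inv A) ** (A ** matrix_inv A)" by (simp add: I)
  also have "\<dots> = matrix_inv A" by (simp add: matrix_mul_assoc \<open>transpose (matrix_inv A) ** A = mat 1\<close>)
  finally show ?thesis .
qed

lemma invertible_posdef:
  fixes A :: "real^'n::finite^'n"
  assumes "\<forall>v::real^'n. v \<noteq> 0 \<longrightarrow> (\<Sum>i\<in>UNIV. \<Sum>j\<in>UNIV. A $ i $ j * v $ i * v $ j) > 0"
  shows "invertible A"
proof -
  have "\<forall>x. A *v x = 0 \<longrightarrow> x = 0"
  proof (intro allI impI)
    fix x assume Ax: "A *v x = 0"
    have "(\<Sum>i\<in>UNIV. \<Sum>j\<in>UNIV. A $ i $ j * x $ i * x $ j) = (\<Sum>i\<in>UNIV. x $ i * (A *v x) $ i)"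
      by (simp add: matrix_vector_mult_def sum_distrib_left mult_ac)
    also have "\<dots> = 0" by (simp add: Ax)
    finally show "x = 0" using assms by force
  qed
  then show ?thesis
    using invertible_left_inverse matrix_left_invertible_ker by blast
qed

lemma ginv_fund:
  fixes F :: "real^'n::finite \<Rightarrow> real"
  assumes "invertible (gmat F y)"
  shows "(\<Sum>k\<in>UNIV. ginv F a k y * fund F k b y) = (if a = b then 1 else 0)"
    and "(\<Sum>k\<in>UNIV. fund F a k y * ginv F k b y) = (if a = b then 1 else 0)"
proof -
  note I = matrix_inv_both[OF assms]
  have "(matrix_inv (gmat F y) ** gmat F y) $ a $ b = mat 1 $ a $ b" using I(2) by simp
  then show "(\<Sum>k\<in>UNIV. ginv F a k y * fund F k b y) = (if a = b then 1 else 0)"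
    by (simp add: matrix_matrix_mult_def mat_def ginv_def gmat_def)
  have "(gmat F y ** matrix_inv (gmat F y)) $ a $ b = mat 1 $ a $ b" using I(1) by simp
  then show "(\<Sum>k\<in>UNIV. fund F a k y * ginv F k b y) = (if a = b then 1 else 0)"
    by (simp add: matrix_matrix_mult_def mat_def ginv_def gmat_def)
qed

lemma ginv_sym:
  fixes F :: "real^'n::finite \<Rightarrow> real"
  assumes "invertible (gmat F y)" "\<And>a b. fund F a b y = fund F b a y"
  shows "ginv F a b y = ginv F b a y"
proof -
  have "transpose (gmat F y) = gmat F y"
    using assms(2) by (simp add: transpose_def gmat_def vec_eq_iff)
  from symmetric_matrix_inv[OF assms(1) this] have "transpose (matrix_inv (gmat F y)) $ b $ a = matrix_inv (gmat F y) $ b $ a"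
    by simp
  then show ?thesis by (simp add: transpose_def ginv_def)
qed

section \<open>Directional derivatives\<close>

lemma has_real_derivative_line:
  fixes G :: "'a::real_normed_vector \<Rightarrow> real"
  assumes "(G has_derivative G') (at (p + s *\<^sub>R v))"
  shows "((\<lambda>t. G (p + t *\<^sub>R v)) has_real_derivative G' v) (at s)"
proof -
  have lin: "linear G'" using assms has_derivative_linear by blast
  have h1: "((\<lambda>t. p + t *\<^sub>R v) has_derivative (\<lambda>t. t *\<^sub>R v)) (at s)"
    by (auto intro!: derivative_eq_intros)
  have "((\<lambda>t. G (p + t *\<^sub>R v)) has_derivative (\<lambda>t. G' (t *\<^sub>R v))) (at s)"
    using has_derivative_compose[OF h1, of G G'] assms by simp
  moreover have "(\<lambda>t. G' (t *\<^sub>R v)) = (\<lambda>t. G' v * t)"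
    using linear_scale[OF lin] by (auto simp: mult.commute)
  ultimately show ?thesis by (simp add: has_field_derivative_def)
qed

lemma dirD_has_derivative:
  fixes G :: "'a::real_normed_vector \<Rightarrow> real"
  assumes "(G has_derivative G') (at z)"
  shows "dirD G v z = G' v"
proof -
  have "((\<lambda>t. G (z + t *\<^sub>R v)) has_real_derivative G' v) (at 0)"
    by (rule has_real_derivative_line) (use assms in simp)
  then show ?thesis unfolding dirD_def by (rule DERIV_imp_deriv)
qed

lemma dirD_cong:
  fixes f g :: "'a::real_normed_vector \<Rightarrow> real"
  assumes "open S" "z \<in> S" "\<And>w. w \<in> S \<Longrightarrow> f w = g w"
  shows "dirD f v z = dirD g v z"
proof -
  have op: "open ((\<lambda>t::real. z + t *\<^sub>R v) -` S)"
    by (rule continuous_open_vimage[OF assms(1)]) (intro continuous_intros)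
  have "eventually (\<lambda>t. (z + t *\<^sub>R v) \<in> S) (nhds (0::real))"
    using op assms(2) by (intro eventually_nhds_in_open[of "(\<lambda>t::real. z + t *\<^sub>R v) -` S", simplified]) auto
  then have "eventually (\<lambda>t. f (z + t *\<^sub>R v) = g (z + t *\<^sub>R v)) (nhds (0::real))"
    by eventually_elim (use assms(3) in auto)
  then show ?thesis unfolding dirD_def by (rule deriv_cong_ev) simp
qed

lemma dirD_mult:
  fixes f g :: "'a::real_normed_vector \<Rightarrow> real"
  assumes "f differentiable (at z)" "g differentiable (at z)"
  shows "dirD (\<lambda>w. f w * g w) v z = dirD f v z * g z + f z * dirD g v z"
proof -
  obtain f' g' where f': "(f has_derivative f') (at z)" and g': "(g has_derivative g') (at z)"
    using assms unfolding differentiable_def by blast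
  have "((\<lambda>w. f w * g w) has_derivative (\<lambda>h. f z * g' h + f' h * g z)) (at z)"
    by (rule has_derivative_mult[OF f' g'])
  then show ?thesis using dirD_has_derivative[OF f'] dirD_has_derivative[OF g'] by (simp add: dirD_has_derivative)
qed

lemma dirD_add:
  fixes f g :: "'a::real_normed_vector \<Rightarrow> real"
  assumes "f differentiable (at z)" "g differentiable (at z)"
  shows "dirD (\<lambda>w. f w + g w) v z = dirD f v z + dirD g v z"
proof -
  obtain f' g' where f': "(f has_derivative f') (at z)" and g': "(g has_derivative g') (at z)"
    using assms unfolding differentiable_def by blast
  have "((\<lambda>w. f w + g w) has_derivative (\<lambda>h. f' h + g' h)) (at z)"
    by (rule has_derivative_add[OF f' g'])
  then show ?thesis using dirD_has_derivative[OF f'] dirD_has_derivative[OF g'] by (simp add: dirD_has_derivative)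
qed

lemma dirD_affine:
  fixes f :: "'a::real_normed_vector \<Rightarrow> real"
  assumes "f differentiable (at z)"
  shows "dirD (\<lambda>w. a * f w + c) v z = a * dirD f v z"
proof -
  obtain f' where f': "(f has_derivative f') (at z)"
    using assms unfolding differentiable_def by blast
  have "((\<lambda>w. a * f w + c) has_derivative (\<lambda>h. a * f' h)) (at z)"
    by (auto intro!: derivative_eq_intros f')
  then show ?thesis using dirD_has_derivative[OF f'] by (simp add: dirD_has_derivative)
qed

lemma dirD_scale_add_betaf:
  fixes f :: "real^'n::finite \<Rightarrow> real"
  assumes "f differentiable (at z)"
  shows "dirD (\<lambda>w. a * f w + betaf bv w) (axis i 1) z = a * dirD f (axis i 1) z + bv $ i"
proof -
  obtain f' where f': "(f has_derivative f') (at z)"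
    using assms unfolding differentiable_def by blast
  have bf: "betaf bv = (\<lambda>w. inner bv w)"
    by (auto simp: betaf_def inner_vec_def)
  have "((\<lambda>w. a * f w + betaf bv w) has_derivative (\<lambda>h. a * f' h + inner bv h)) (at z)"
    unfolding bf by (auto intro!: derivative_eq_intros f')
  then show ?thesis using dirD_has_derivative[OF f'] by (simp add: dirD_has_derivative inner_axis)
qed

lemma has_real_derivative_line_dirD:
  fixes f :: "'a::real_normed_vector \<Rightarrow> real"
  assumes "f differentiable (at (p + s *\<^sub>R u))"
  shows "((\<lambda>t. f (p + t *\<^sub>R u)) has_real_derivative dirD f u (p + s *\<^sub>R u)) (at s)"
proof -
  obtain f' where f': "(f has_derivative f') (at (p + s *\<^sub>R u))"
    using assms unfolding differentiable_def by blast
  show ?thesis using has_real_derivative_line[OF f'] dirD_has_derivative[OF f'] by simp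
qed

lemma increment_estimate:
  fixes A :: "'a::real_normed_vector \<Rightarrow> real"
  assumes lin: "linear A'" and d1: "\<forall>w. norm (w - z) < d1 \<longrightarrow> \<bar>A w - A z - A' (w - z)\<bar> \<le> e * norm (w - z)"
    and e: "e > 0" and t: "t > 0" and xi: "0 \<le> \<xi>" "\<xi> \<le> t"
    and small: "t * (norm u + norm v) < d1"
  shows "\<bar>(A (z + t *\<^sub>R v + \<xi> *\<^sub>R u) - A (z + \<xi> *\<^sub>R u)) - t * A' v\<bar> \<le> e * t * (2 * norm u + norm v)"
proof -
  have n1: "norm (t *\<^sub>R v + \<xi> *\<^sub>R u) \<le> t * norm v + t * norm u"
  proof -
    have "norm (t *\<^sub>R v + \<xi> *\<^sub>R u) \<le> norm (t *\<^sub>R v) + norm (\<xi> *\<^sub>R u)" by (rule norm_triangle_ineq)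
    also have "\<dots> = t * norm v + \<xi> * norm u" using t xi by simp
    also have "\<dots> \<le> t * norm v + t * norm u" using xi by (simp add: mult_right_mono)
    finally show ?thesis .
  qed
  have n2: "norm (\<xi> *\<^sub>R u) \<le> t * norm u" using xi by (simp add: mult_right_mono)
  have e1: "\<bar>A (z + t *\<^sub>R v + \<xi> *\<^sub>R u) - A z - A' (t *\<^sub>R v + \<xi> *\<^sub>R u)\<bar> \<le> e * norm (t *\<^sub>R v + \<xi> *\<^sub>R u)"
    using d1[rule_format, of "z + t *\<^sub>R v + \<xi> *\<^sub>R u"] n1 small
    by (simp add: add.assoc algebra_simps)
  have e2: "\<bar>A (z + \<xi> *\<^sub>R u) - A z - A' (\<xi> *\<^sub>R u)\<bar> \<le> e * norm (\<xi> *\<^sub>R u)"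
    using d1[rule_format, of "z + \<xi> *\<^sub>R u"] n2 small t
    by (smt (verit, best) add_diff_cancel_left' mult_left_mono norm_ge_zero)
  have lineq: "A' (t *\<^sub>R v + \<xi> *\<^sub>R u) - A' (\<xi> *\<^sub>R u) = t * A' v"
    using linear_add[OF lin] linear_scale[OF lin] by simp
  have "\<bar>(A (z + t *\<^sub>R v + \<xi> *\<^sub>R u) - A (z + \<xi> *\<^sub>R u)) - t * A' v\<bar>
     \<le> \<bar>A (z + t *\<^sub>R v + \<xi> *\<^sub>R u) - A z - A' (t *\<^sub>R v + \<xi> *\<^sub>R u)\<bar> + \<bar>A (z + \<xi> *\<^sub>R u) - A z - A' (\<xi> *\<^sub>R u)\<bar>"
    using lineq by linarith
  also have "\<dots> \<le> e * norm (t *\<^sub>R v + \<xi> *\<^sub>R u) + e * norm (\<xi> *\<^sub>R u)" using e1 e2 by linarith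
  also have "\<dots> \<le> e * (t * norm v + t * norm u) + e * (t * norm u)"
    using n1 n2 e by (intro add_mono mult_left_mono) auto
  also have "\<dots> = e * t * (2 * norm u + norm v)" by (simp add: algebra_simps)
  finally show ?thesis .
qed

lemma dirD_cmult:
  fixes f :: "'a::real_normed_vector \<Rightarrow> real"
  assumes "f differentiable (at z)"
  shows "dirD (\<lambda>w. a * f w) v z = a * dirD f v z"
  using dirD_affine[OF assms, of a 0 v] by simp

lemma second_difference_mvt:
  fixes f :: "'a::real_normed_vector \<Rightarrow> real"
  assumes fd: "\<And>w. w \<in> S \<Longrightarrow> f differentiable (at w)" and t: "t > 0"
    and inS: "\<And>a b. 0 \<le> a \<Longrightarrow> a \<le> t \<Longrightarrow> 0 \<le> b \<Longrightarrow> b \<le> t \<Longrightarrow> z + a *\<^sub>R u + b *\<^sub>R v \<in> S"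
  obtains \<xi> where "0 < \<xi>" "\<xi> < t"
    "f (z + t *\<^sub>R u + t *\<^sub>R v) - f (z + t *\<^sub>R u)
       = f (z + t *\<^sub>R v) - f z + t * (dirD f u (z + t *\<^sub>R v + \<xi> *\<^sub>R u) - dirD f u (z + \<xi> *\<^sub>R u))"
proof -
  define \<phi> where "\<phi> s = f ((z + t *\<^sub>R v) + s *\<^sub>R u) - f (z + s *\<^sub>R u)" for s
  have d\<phi>: "DERIV \<phi> s :> dirD f u ((z + t *\<^sub>R v) + s *\<^sub>R u) - dirD f u (z + s *\<^sub>R u)"
    if "0 \<le> s" "s \<le> t" for s
  proof -
    have "(z + t *\<^sub>R v) + s *\<^sub>R u \<in> S" "z + s *\<^sub>R u \<in> S"
      using inS[of s t] inS[of s 0] that t by (simp_all add: algebra_simps)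
    then show ?thesis
      unfolding \<phi>_def by (intro DERIV_diff has_real_derivative_line_dirD fd)
  qed
  then obtain \<xi> where "0 < \<xi>" "\<xi> < t"
    "\<phi> t - \<phi> 0 = (t - 0) * (dirD f u ((z + t *\<^sub>R v) + \<xi> *\<^sub>R u) - dirD f u (z + \<xi> *\<^sub>R u))"
    using MVT2[OF t d\<phi>] by blast
  then show ?thesis
    using that unfolding \<phi>_def by (simp add: algebra_simps)
qed

lemma small_combination_in_ball:
  fixes u v z :: "'a::real_normed_vector"
  assumes "t * (norm u + norm v) < d" "0 \<le> a" "a \<le> t" "0 \<le> b" "b \<le> t"
  shows "z + a *\<^sub>R u + b *\<^sub>R v \<in> ball z d"
proof -
  have "norm (a *\<^sub>R u + b *\<^sub>R v) \<le> a * norm u + b * norm v"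
    using norm_triangle_ineq[of "a *\<^sub>R u" "b *\<^sub>R v"] assms by simp
  also have "\<dots> \<le> t * norm u + t * norm v" using assms by (intro add_mono mult_right_mono) auto
  finally have "dist (z + a *\<^sub>R u + b *\<^sub>R v) z < d"
    using assms(1) by (simp add: dist_norm add.assoc algebra_simps)
  then show ?thesis by (simp add: mem_ball dist_commute)
qed

lemma dirD_commute_estimate:
  fixes f :: "'a::real_normed_vector \<Rightarrow> real"
  assumes S: "open S" "z \<in> S" and fd: "\<And>w. w \<in> S \<Longrightarrow> f differentiable (at w)"
    and A': "(dirD f u has_derivative A') (at z)" and B': "(dirD f v has_derivative B') (at z)"
    and e: "e > 0"
  shows "\<bar>A' v - B' u\<bar> \<le> e * (3 * (norm u + norm v))"
proof -
  obtain d0 where d0: "d0 > 0" "ball z d0 \<subseteq> S" using S openE by blast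
  obtain d1 where d1: "d1 > 0" "\<forall>w. norm (w - z) < d1 \<longrightarrow> \<bar>dirD f u w - dirD f u z - A' (w - z)\<bar> \<le> e * norm (w - z)"
    using A' e unfolding has_derivative_at_alt by (auto simp: real_norm_def)
  obtain d2 where d2: "d2 > 0" "\<forall>w. norm (w - z) < d2 \<longrightarrow> \<bar>dirD f v w - dirD f v z - B' (w - z)\<bar> \<le> e * norm (w - z)"
    using B' e unfolding has_derivative_at_alt by (auto simp: real_norm_def)
  define K where "K = norm u + norm v + 1"
  define dm where "dm = min d0 (min d1 d2)"
  define t where "t = dm / (2 * K)"
  have K0: "K > 0" unfolding K_def by (simp add: add_nonneg_pos)
  have dm0: "dm > 0" unfolding dm_def using d0 d1 d2 by simp
  have t0: "t > 0" unfolding t_def using K0 dm0 by simp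
  have "t * K < dm" unfolding t_def using K0 dm0 by (simp add: field_simps)
  then have sm: "t * (norm u + norm v) < d0" "t * (norm u + norm v) < d1" "t * (norm u + norm v) < d2"
    using t0 unfolding K_def dm_def by (auto simp: algebra_simps)
  have inS: "z + a *\<^sub>R u + b *\<^sub>R v \<in> S" "z + b *\<^sub>R v + a *\<^sub>R u \<in> S"
    if "0 \<le> a" "a \<le> t" "0 \<le> b" "b \<le> t" for a b
    using small_combination_in_ball[OF sm(1) that, of z] d0(2) by (auto simp: algebra_simps)
  obtain \<xi> where xi: "0 < \<xi>" "\<xi> < t" and mvA:
    "f (z + t *\<^sub>R u + t *\<^sub>R v) - f (z + t *\<^sub>R u)
       = f (z + t *\<^sub>R v) - f z + t * (dirD f u (z + t *\<^sub>R v + \<xi> *\<^sub>R u) - dirD f u (z + \<xi> *\<^sub>R u))"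
    using second_difference_mvt[OF fd t0 inS(1)] by blast
  obtain \<eta> where eta: "0 < \<eta>" "\<eta> < t" and mvB:
    "f (z + t *\<^sub>R v + t *\<^sub>R u) - f (z + t *\<^sub>R v)
       = f (z + t *\<^sub>R u) - f z + t * (dirD f v (z + t *\<^sub>R u + \<eta> *\<^sub>R v) - dirD f v (z + \<eta> *\<^sub>R v))"
    using second_difference_mvt[OF fd t0 inS(2)] by blast
  have "f (z + t *\<^sub>R v + t *\<^sub>R u) = f (z + t *\<^sub>R u + t *\<^sub>R v)" by (simp add: algebra_simps)
  then have "t * (dirD f u (z + t *\<^sub>R v + \<xi> *\<^sub>R u) - dirD f u (z + \<xi> *\<^sub>R u))
      = t * (dirD f v (z + t *\<^sub>R u + \<eta> *\<^sub>R v) - dirD f v (z + \<eta> *\<^sub>R v))"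
    using mvA mvB by linarith
  then have PAB: "dirD f u (z + t *\<^sub>R v + \<xi> *\<^sub>R u) - dirD f u (z + \<xi> *\<^sub>R u)
      = dirD f v (z + t *\<^sub>R u + \<eta> *\<^sub>R v) - dirD f v (z + \<eta> *\<^sub>R v)"
    using t0 by simp
  have EA: "\<bar>(dirD f u (z + t *\<^sub>R v + \<xi> *\<^sub>R u) - dirD f u (z + \<xi> *\<^sub>R u)) - t * A' v\<bar> \<le> e * t * (2 * norm u + norm v)"
    by (rule increment_estimate[OF has_derivative_linear[OF A'] d1(2) e t0]) (use xi sm in auto)
  have EB: "\<bar>(dirD f v (z + t *\<^sub>R u + \<eta> *\<^sub>R v) - dirD f v (z + \<eta> *\<^sub>R v)) - t * B' u\<bar> \<le> e * t * (2 * norm v + norm u)"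
    by (rule increment_estimate[OF has_derivative_linear[OF B'] d2(2) e t0]) (use eta sm in \<open>auto simp: add.commute\<close>)
  have "t * \<bar>A' v - B' u\<bar> = \<bar>t * A' v - t * B' u\<bar>"
    using t0 by (metis abs_mult abs_of_pos right_diff_distrib)
  also have "\<dots> \<le> e * t * (2 * norm u + norm v) + e * t * (2 * norm v + norm u)"
    using PAB EA EB by arith
  also have "\<dots> = t * (e * (3 * (norm u + norm v)))" by (simp add: algebra_simps)
  finally show ?thesis using t0 by simp
qed

lemma dirD_commute:
  fixes f :: "'a::real_normed_vector \<Rightarrow> real"
  assumes S: "open S" "z \<in> S" and fd: "\<And>w. w \<in> S \<Longrightarrow> f differentiable (at w)"
    and du: "dirD f u differentiable (at z)" and dv: "dirD f v differentiable (at z)"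
  shows "dirD (dirD f u) v z = dirD (dirD f v) u z"
proof -
  obtain A' where A': "(dirD f u has_derivative A') (at z)" using du unfolding differentiable_def by blast
  obtain B' where B': "(dirD f v has_derivative B') (at z)" using dv unfolding differentiable_def by blast
  define M where "M = 3 * (norm u + norm v)"
  have M: "M \<ge> 0" unfolding M_def by simp
  have "\<bar>A' v - B' u\<bar> \<le> 0 + e" if "e > 0" for e
  proof -
    have "\<bar>A' v - B' u\<bar> \<le> e / (M + 1) * M"
      using dirD_commute_estimate[OF S fd A' B', of "e / (M + 1)"] that M unfolding M_def
      by (simp add: add_nonneg_pos)
    also have "\<dots> \<le> e" using that M by (simp add: field_simps)
    finally show ?thesis by simp
  qed
  then have "A' v = B' u"
    using field_le_epsilon[of "\<bar>A' v - B' u\<bar>" 0] by simp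
  then show ?thesis using dirD_has_derivative[OF A'] dirD_has_derivative[OF B'] by simp
qed

section \<open>Smoothness in the fibre\<close>

definition fibre_smooth :: "(real^'n::finite \<Rightarrow> real) \<Rightarrow> bool" where
  "fibre_smooth G \<longleftrightarrow> (\<forall>vs. set vs \<subseteq> range (\<lambda>i. axis i (1::real)) \<longrightarrow> (\<forall>z. z \<noteq> 0 \<longrightarrow> iterD vs G differentiable (at z)))"

lemma iterD_fibre:
  fixes L :: "real^'n::finite \<Rightarrow> real^'n \<Rightarrow> real"
  shows "iterD (map (\<lambda>v. (0::real^'n, v)) vs) (\<lambda>p. L (fst p) (snd p)) (x', z) = iterD vs (L x') z"
proof (induction vs arbitrary: x' z)
  case Nil
  then show ?case by simp
next
  case (Cons v vs)
  have "iterD (map (\<lambda>v. (0::real^'n, v)) (v # vs)) (\<lambda>p. L (fst p) (snd p)) (x', z)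
      = deriv (\<lambda>t. iterD (map (\<lambda>v. (0::real^'n, v)) vs) (\<lambda>p. L (fst p) (snd p)) (x', z + t *\<^sub>R v)) 0"
    by (simp add: dirD_def)
  also have "\<dots> = deriv (\<lambda>t. iterD vs (L x') (z + t *\<^sub>R v)) 0" by (simp only: Cons.IH)
  also have "\<dots> = iterD (v # vs) (L x') z" by (simp add: dirD_def)
  finally show ?case .
qed

lemma fibre_smooth_finsler:
  fixes L :: "real^'n::finite \<Rightarrow> real^'n \<Rightarrow> real"
  assumes FL: "finsler_on U L" and x: "x \<in> U"
  shows "fibre_smooth (L x)"
  unfolding fibre_smooth_def
proof (intro allI impI)
  fix vs :: "(real^'n) list" and z :: "real^'n"
  assume vs: "set vs \<subseteq> range (\<lambda>i. axis i (1::real))" and z: "z \<noteq> 0"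
  let ?\<Phi> = "\<lambda>p::(real^'n) \<times> (real^'n). L (fst p) (snd p)"
  let ?vs' = "map (\<lambda>v. (0::real^'n, v)) vs"
  have sm: "smooth_on {p :: (real^'n) \<times> (real^'n). fst p \<in> U \<and> snd p \<noteq> 0} ?\<Phi>"
    using FL unfolding finsler_on_def by blast
  have b: "set ?vs' \<subseteq> Basis"
  proof
    fix w assume "w \<in> set ?vs'"
    then obtain i where "w = (0, axis i 1)" using vs by auto
    then show "w \<in> Basis" by (auto simp: Basis_prod_def)
  qed
  have d: "iterD ?vs' ?\<Phi> differentiable (at (x, z))"
    using sm b x z unfolding smooth_on_def by auto
  have e: "iterD vs (L x) = (\<lambda>w. iterD ?vs' ?\<Phi> (x, w))"
    by (rule ext) (simp only: iterD_fibre)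
  have p: "(\<lambda>w. (x, w)) differentiable (at z)"
  proof -
    have "((\<lambda>w::real^'n. (x, w)) has_derivative (\<lambda>h. (0, h))) (at z)"
      by (auto intro!: derivative_eq_intros)
    then show ?thesis unfolding differentiable_def by blast
  qed
  show "iterD vs (L x) differentiable (at z)"
    unfolding e by (rule differentiable_compose[OF _ p]) (use d in simp)
qed

lemma fibre_smooth_diff: "fibre_smooth G \<Longrightarrow> z \<noteq> 0 \<Longrightarrow> G differentiable (at z)"
  unfolding fibre_smooth_def by (metis empty_subsetI iterD.simps(1) list.set(1))

lemma fibre_smooth_diff_pdy: "fibre_smooth G \<Longrightarrow> z \<noteq> 0 \<Longrightarrow> pdy j G differentiable (at z)"
proof -
  assume "fibre_smooth G" "z \<noteq> 0"
  moreover have "set [axis j (1::real)] \<subseteq> range (\<lambda>i. axis i (1::real))" by auto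
  ultimately have "iterD [axis j 1] G differentiable (at z)" unfolding fibre_smooth_def by blast
  then show ?thesis by (simp add: pdy_def)
qed

lemma fibre_smooth_diff_pdy2: "fibre_smooth G \<Longrightarrow> z \<noteq> 0 \<Longrightarrow> pdy i (pdy j G) differentiable (at z)"
proof -
  assume "fibre_smooth G" "z \<noteq> 0"
  moreover have "set [axis i (1::real), axis j 1] \<subseteq> range (\<lambda>i. axis i (1::real))" by auto
  ultimately have "iterD [axis i 1, axis j 1] G differentiable (at z)" unfolding fibre_smooth_def by blast
  then show ?thesis by (simp add: pdy_def)
qed

lemma open_nonzero: "open (-{0::real^'n::finite})" by (simp add: open_Compl)

lemma fund_eq_hessian:
  assumes G: "fibre_smooth G" and z: "z \<noteq> 0"
  shows "fund G i j z = pdy i G z * pdy j G z + G z * pdy i (pdy j G) z"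
proof -
  have sq: "pdy j (\<lambda>w. (G w)^2) w = G w * (2 * pdy j G w)" if "w \<noteq> 0" for w
  proof -
    have "pdy j (\<lambda>w. (G w)^2) w = dirD (\<lambda>w. G w * G w) (axis j 1) w"
      by (simp add: pdy_def power2_eq_square)
    also have "\<dots> = G w * (2 * pdy j G w)"
      using dirD_mult[OF fibre_smooth_diff[OF G that] fibre_smooth_diff[OF G that]] by (simp add: pdy_def)
    finally show ?thesis .
  qed
  have "fund G i j z = 1/2 * pdy i (\<lambda>w. G w * (2 * pdy j G w)) z"
    unfolding fund_def pdy_def
    by (subst dirD_cong[OF open_nonzero, of z "dirD (\<lambda>z. (G z)\<^sup>2) (axis j 1)" "\<lambda>w. G w * (2 * pdy j G w)"])
       (use z sq in \<open>auto simp: pdy_def\<close>)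
  also have "\<dots> = 1/2 * (pdy i G z * (2 * pdy j G z) + G z * (2 * pdy i (pdy j G) z))"
  proof -
    have d2: "(\<lambda>w. 2 * pdy j G w) differentiable (at z)"
      using fibre_smooth_diff_pdy[OF G z] by simp
    show ?thesis unfolding pdy_def
      using dirD_mult[OF fibre_smooth_diff[OF G z] d2] dirD_cmult[OF fibre_smooth_diff_pdy[OF G z], of 2] by (simp add: pdy_def)
  qed
  finally show ?thesis by simp
qed

lemma cten_eq_hessian:
  assumes G: "fibre_smooth G" and z: "z \<noteq> 0"
  shows "cten G i j k z = (pdy k (pdy i G) z * pdy j G z + pdy i G z * pdy k (pdy j G) z
      + pdy k G z * pdy i (pdy j G) z + G z * pdy k (pdy i (pdy j G)) z) / 2"
proof -
  have "cten G i j k z = 1/2 * pdy k (\<lambda>w. pdy i G w * pdy j G w + G w * pdy i (pdy j G) w) z"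
    unfolding cten_def pdy_def
    by (subst dirD_cong[OF open_nonzero, of z "fund G i j" "\<lambda>w. pdy i G w * pdy j G w + G w * pdy i (pdy j G) w"])
       (use z fund_eq_hessian[OF G] in \<open>auto simp: pdy_def\<close>)
  also have "pdy k (\<lambda>w. pdy i G w * pdy j G w + G w * pdy i (pdy j G) w) z
      = pdy k (pdy i G) z * pdy j G z + pdy i G z * pdy k (pdy j G) z
      + (pdy k G z * pdy i (pdy j G) z + G z * pdy k (pdy i (pdy j G)) z)"
  proof -
    have a: "(\<lambda>w. pdy i G w * pdy j G w) differentiable (at z)"
      using fibre_smooth_diff_pdy[OF G z, of i] fibre_smooth_diff_pdy[OF G z, of j] by simp
    have b: "(\<lambda>w. G w * pdy i (pdy j G) w) differentiable (at z)"
      using fibre_smooth_diff[OF G z] fibre_smooth_diff_pdy2[OF G z, of i j] by simp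
    show ?thesis unfolding pdy_def
      using dirD_add[OF a b] dirD_mult[OF fibre_smooth_diff_pdy[OF G z, of i] fibre_smooth_diff_pdy[OF G z, of j]]
        dirD_mult[OF fibre_smooth_diff[OF G z] fibre_smooth_diff_pdy2[OF G z, of i j]]
      by (simp add: pdy_def)
  qed
  finally show ?thesis by simp
qed

lemma pdy_commute:
  assumes G: "fibre_smooth G" and z: "z \<noteq> 0"
  shows "pdy i (pdy j G) z = pdy j (pdy i G) z"
  unfolding pdy_def
  by (rule dirD_commute[OF open_nonzero]) (use z fibre_smooth_diff[OF G] fibre_smooth_diff_pdy[OF G] in \<open>auto simp: pdy_def\<close>)

lemma pdy3_commute_inner:
  assumes G: "fibre_smooth G" and z: "z \<noteq> 0"
  shows "pdy k (pdy i (pdy j G)) z = pdy k (pdy j (pdy i G)) z"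
  unfolding pdy_def
  by (rule dirD_cong[OF open_nonzero]) (use z pdy_commute[OF G] in \<open>auto simp: pdy_def\<close>)

lemma pdy3_commute_outer:
  assumes G: "fibre_smooth G" and z: "z \<noteq> 0"
  shows "pdy k (pdy i (pdy j G)) z = pdy i (pdy k (pdy j G)) z"
  unfolding pdy_def
  by (rule dirD_commute[OF open_nonzero]) (use z fibre_smooth_diff_pdy[OF G] fibre_smooth_diff_pdy2[OF G] in \<open>auto simp: pdy_def\<close>)

section \<open>Homogeneous functions\<close>

lemma dirD_homogeneous:
  fixes G :: "real^'n::finite \<Rightarrow> real"
  assumes d: "G differentiable (at z)" and z: "z \<noteq> 0" and t: "t > 0"
    and hom: "\<And>w. w \<noteq> 0 \<Longrightarrow> G (t *\<^sub>R w) = c * G w"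
  shows "dirD G v (t *\<^sub>R z) = c / t * dirD G v z"
proof -
  obtain G' where G': "(G has_derivative G') (at z)" using d unfolding differentiable_def by blast
  have lin: "linear G'" using G' has_derivative_linear by blast
  have h: "((\<lambda>s. c * G (z + s *\<^sub>R ((1/t) *\<^sub>R v))) has_real_derivative c * G' ((1/t) *\<^sub>R v)) (at 0)"
    using has_real_derivative_line[of G G' z 0 "(1/t) *\<^sub>R v"] G' by (auto intro!: DERIV_cmult)
  have op: "open ((\<lambda>s::real. z + s *\<^sub>R ((1/t) *\<^sub>R v)) -` (-{0}))"
    by (rule continuous_open_vimage[OF open_nonzero]) (intro continuous_intros)
  have "eventually (\<lambda>s. s \<in> (\<lambda>s::real. z + s *\<^sub>R ((1/t) *\<^sub>R v)) -` (-{0})) (nhds (0::real))"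
    by (rule eventually_nhds_in_open[OF op]) (simp add: z)
  then have ev: "eventually (\<lambda>s. G (t *\<^sub>R z + s *\<^sub>R v) = c * G (z + s *\<^sub>R ((1/t) *\<^sub>R v))) (nhds (0::real))"
  proof eventually_elim
    case (elim s)
    have "t *\<^sub>R z + s *\<^sub>R v = t *\<^sub>R (z + s *\<^sub>R ((1/t) *\<^sub>R v))" using t by (simp add: algebra_simps)
    then show ?case using hom[of "z + s *\<^sub>R ((1/t) *\<^sub>R v)"] elim by simp
  qed
  have "((\<lambda>s. G (t *\<^sub>R z + s *\<^sub>R v)) has_real_derivative c * G' ((1/t) *\<^sub>R v)) (at 0)"
    using h DERIV_cong_ev[OF refl ev refl] by simp
  then have "dirD G v (t *\<^sub>R z) = c * G' ((1/t) *\<^sub>R v)" unfolding dirD_def by (rule DERIV_imp_deriv)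
  also have "\<dots> = c / t * G' v" using linear_scale[OF lin] by simp
  also have "G' v = dirD G v z" using dirD_has_derivative[OF G'] by simp
  finally show ?thesis .
qed

lemma has_derivative_pdy_expansion:
  fixes G :: "real^'n::finite \<Rightarrow> real"
  assumes G': "(G has_derivative G') (at z)"
  shows "G' v = (\<Sum>i\<in>UNIV. pdy i G z * v $ i)"
proof -
  have lin: "linear G'" using G' has_derivative_linear by blast
  have vexp: "v = (\<Sum>i\<in>UNIV. v $ i *\<^sub>R axis i 1)"
    using basis_expansion[of v] by (simp add: scalar_mult_eq_scaleR)
  have "G' v = (\<Sum>i\<in>UNIV. v $ i * G' (axis i 1))"
    by (subst vexp) (simp add: linear_sum[OF lin] linear_scale[OF lin])
  also have "\<dots> = (\<Sum>i\<in>UNIV. pdy i G z * v $ i)"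
    by (simp add: pdy_def dirD_has_derivative[OF G'] mult.commute)
  finally show ?thesis .
qed

lemma euler_homogeneous:
  fixes G :: "real^'n::finite \<Rightarrow> real"
  assumes d: "G differentiable (at z)"
    and hom: "\<And>s. s > 0 \<Longrightarrow> G (s *\<^sub>R z) = \<phi> s * G z"
    and d\<phi>: "(\<phi> has_real_derivative dd) (at 1)"
  shows "(\<Sum>i\<in>UNIV. pdy i G z * z $ i) = dd * G z"
proof -
  obtain G' where G': "(G has_derivative G') (at z)" using d unfolding differentiable_def by blast
  have h1: "((\<lambda>s. G (z + s *\<^sub>R z)) has_real_derivative G' z) (at 0)"
    using has_real_derivative_line[of G G' z 0 z] G' by simp
  have h2: "((\<lambda>s. \<phi> (1 + s) * G z) has_real_derivative dd * G z) (at 0)"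
  proof -
    have "((\<lambda>s. \<phi> (1 + s)) has_real_derivative dd * 1) (at 0)"
      by (rule DERIV_chain2[of \<phi>]) (use d\<phi> in simp, auto intro!: derivative_eq_intros)
    then show ?thesis by (auto intro!: DERIV_cmult_right[where c = "G z", simplified])
  qed
  have "eventually (\<lambda>s::real. s \<in> {s. s > -1}) (nhds 0)"
    by (intro eventually_nhds_in_open) (auto simp: open_greaterThan[unfolded greaterThan_def])
  then have ev: "eventually (\<lambda>s. G (z + s *\<^sub>R z) = \<phi> (1 + s) * G z) (nhds (0::real))"
  proof eventually_elim
    case (elim s)
    have "z + s *\<^sub>R z = (1 + s) *\<^sub>R z" by (simp add: algebra_simps)
    then show ?case using hom[of "1 + s"] elim by simp
  qed
  have "((\<lambda>s. G (z + s *\<^sub>R z)) has_real_derivative dd * G z) (at 0)"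
    using h2 DERIV_cong_ev[OF refl ev refl] by simp
  then have "G' z = dd * G z" using h1 DERIV_unique by blast
  then show ?thesis using has_derivative_pdy_expansion[OF G', of z] by simp
qed
section \<open>Second and third fibre derivatives of a Finsler function\<close>

text \<open>Q and R stand for the second and third y-derivatives of F at y.\<close>

definition fibre_jet :: "(real^'n::finite \<Rightarrow> real) \<Rightarrow> real^'n \<Rightarrow> ('n \<Rightarrow> 'n \<Rightarrow> real) \<Rightarrow>
    ('n \<Rightarrow> 'n \<Rightarrow> 'n \<Rightarrow> real) \<Rightarrow> bool" where
  "fibre_jet F y Q R \<longleftrightarrow> (\<forall>i j. Q i j = Q j i) \<and> symmetric3 R \<and>
     (\<forall>i j. fund F i j y = lcov F i y * lcov F j y + F y * Q i j) \<and>
     (\<forall>i j k. cten F i j k y =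
        (Q k i * lcov F j y + lcov F i y * Q k j + lcov F k y * Q i j + F y * R i j k) / 2)"

text \<open>Euler's relations: F, Q and R are homogeneous of degrees 1, 0 and -1.\<close>

definition euler_jet :: "(real^'n::finite \<Rightarrow> real) \<Rightarrow> real^'n \<Rightarrow> ('n \<Rightarrow> 'n \<Rightarrow> real) \<Rightarrow>
    ('n \<Rightarrow> 'n \<Rightarrow> 'n \<Rightarrow> real) \<Rightarrow> bool" where
  "euler_jet F y Q R \<longleftrightarrow> (\<Sum>i\<in>UNIV. lcov F i y * y $ i) = F y \<and>
     (\<forall>j. (\<Sum>i\<in>UNIV. Q i j * y $ i) = 0) \<and> (\<forall>i j. (\<Sum>k\<in>UNIV. R i j k * y $ k) = - Q i j)"

lemma fibre_jet_pdy:
  assumes G: "fibre_smooth G" and z: "z \<noteq> 0"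
  shows "fibre_jet G z (\<lambda>i j. pdy i (pdy j G) z) (\<lambda>i j k. pdy k (pdy i (pdy j G)) z)"
proof -
  have "symmetric3 (\<lambda>i j k. pdy k (pdy i (pdy j G)) z)"
    unfolding symmetric3_def
  proof (intro allI conjI)
    fix i j k
    show "pdy k (pdy i (pdy j G)) z = pdy k (pdy j (pdy i G)) z"
      by (rule pdy3_commute_inner[OF G z])
    have "pdy k (pdy i (pdy j G)) z = pdy k (pdy j (pdy i G)) z" by (rule pdy3_commute_inner[OF G z])
    also have "\<dots> = pdy j (pdy k (pdy i G)) z" by (rule pdy3_commute_outer[OF G z])
    also have "\<dots> = pdy j (pdy i (pdy k G)) z" by (rule pdy3_commute_inner[OF G z])
    finally show "pdy k (pdy i (pdy j G)) z = pdy j (pdy i (pdy k G)) z" .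
  qed
  then show ?thesis
    unfolding fibre_jet_def lcov_def
    using pdy_commute[OF G z] fund_eq_hessian[OF G z] cten_eq_hessian[OF G z] by simp
qed

lemma euler_jet_pdy:
  assumes G: "fibre_smooth G" and z: "z \<noteq> 0"
    and hom: "\<And>w s. w \<noteq> 0 \<Longrightarrow> s > 0 \<Longrightarrow> G (s *\<^sub>R w) = s * G w"
  shows "euler_jet G z (\<lambda>i j. pdy i (pdy j G) z) (\<lambda>i j k. pdy k (pdy i (pdy j G)) z)"
proof -
  have hom1: "pdy j G (s *\<^sub>R w) = 1 * pdy j G w" if "w \<noteq> 0" "s > 0" for j s w
    using dirD_homogeneous[OF fibre_smooth_diff[OF G that(1)] that(1) that(2), where c = s] hom that
    by (simp add: pdy_def)
  have hom2: "pdy i (pdy j G) (s *\<^sub>R w) = 1 / s * pdy i (pdy j G) w" if "w \<noteq> 0" "s > 0" for i j s w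
    using dirD_homogeneous[OF fibre_smooth_diff_pdy[OF G that(1), of j] that(1) that(2), where c = 1] hom1 that
    by (simp add: pdy_def)
  have "(\<Sum>i\<in>UNIV. lcov G i z * z $ i) = G z"
    using euler_homogeneous[OF fibre_smooth_diff[OF G z], where \<phi> = "\<lambda>s. s" and dd = 1] hom[OF z]
    unfolding lcov_def by (auto intro!: derivative_eq_intros)
  moreover have "(\<Sum>i\<in>UNIV. pdy i (pdy j G) z * z $ i) = 0" for j
    using euler_homogeneous[OF fibre_smooth_diff_pdy[OF G z, of j], where \<phi> = "\<lambda>s. 1" and dd = 0] hom1[OF z]
    by (auto intro!: derivative_eq_intros)
  moreover have "(\<Sum>k\<in>UNIV. pdy k (pdy i (pdy j G)) z * z $ k) = - pdy i (pdy j G) z" for i j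
  proof -
    have d: "((\<lambda>s::real. 1 / s) has_real_derivative -1) (at 1)"
      by (auto intro!: derivative_eq_intros)
    show ?thesis
      using euler_homogeneous[OF fibre_smooth_diff_pdy2[OF G z, of i j] _ d] hom2[OF z] by simp
  qed
  ultimately show ?thesis unfolding euler_jet_def by blast
qed

lemma pdy_scale_add_betaf:
  assumes F: "fibre_smooth F" and w: "w \<noteq> 0"
  shows "pdy j (\<lambda>v. a * F v + betaf bv v) w = a * pdy j F w + bv $ j"
  unfolding pdy_def by (rule dirD_scale_add_betaf[OF fibre_smooth_diff[OF F w]])

lemma fibre_jet_scale_add_betaf:
  assumes F: "fibre_smooth F" and Fs: "fibre_smooth Fs" and z: "z \<noteq> 0"
    and Fs_eq: "Fs = (\<lambda>v. a * F v + betaf bv v)"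
  shows "fibre_jet Fs z (\<lambda>i j. a * pdy i (pdy j F) z) (\<lambda>i j k. a * pdy k (pdy i (pdy j F)) z)"
proof -
  have Q: "pdy i (pdy j Fs) w = a * pdy i (pdy j F) w" if "w \<noteq> 0" for i j w
  proof -
    have "pdy i (pdy j Fs) w = dirD (\<lambda>w. a * pdy j F w + bv $ j) (axis i 1) w"
      unfolding pdy_def[of i] Fs_eq
      by (rule dirD_cong[OF open_nonzero]) (use that pdy_scale_add_betaf[OF F] in auto)
    also have "\<dots> = a * pdy i (pdy j F) w"
      unfolding pdy_def[of i] by (rule dirD_affine[OF fibre_smooth_diff_pdy[OF F that]])
    finally show ?thesis .
  qed
  have R: "pdy k (pdy i (pdy j Fs)) z = a * pdy k (pdy i (pdy j F)) z" for i j k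
  proof -
    have "pdy k (pdy i (pdy j Fs)) z = dirD (\<lambda>w. a * pdy i (pdy j F) w) (axis k 1) z"
      unfolding pdy_def[of k] by (rule dirD_cong[OF open_nonzero]) (use z Q in auto)
    also have "\<dots> = a * pdy k (pdy i (pdy j F)) z"
      unfolding pdy_def[of k] by (rule dirD_cmult[OF fibre_smooth_diff_pdy2[OF F z]])
    finally show ?thesis .
  qed
  show ?thesis
    using fibre_jet_pdy[OF Fs z] by (simp add: Q[OF z] R)
qed

section \<open>The S-tensors under a conformal \<beta>-change at a fixed point\<close>

lemma fibre_jetD:
  assumes "fibre_jet F y Q R"
  shows "Q i j = Q j i" "symmetric3 R" "fund F i j y = lcov F i y * lcov F j y + F y * Q i j"
    "cten F i j k y = (Q k i * lcov F j y + lcov F i y * Q k j + lcov F k y * Q i j + F y * R i j k) / 2"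
    "hang F i j y = F y * Q i j"
  using assms unfolding fibre_jet_def hang_def by auto

lemma euler_jetD:
  assumes "fibre_jet F y Q R" "euler_jet F y Q R"
  shows "(\<Sum>i\<in>UNIV. lcov F i y * y $ i) = F y" "(\<Sum>i\<in>UNIV. Q i j * y $ i) = 0"
    "(\<Sum>j\<in>UNIV. Q i j * y $ j) = 0" "(\<Sum>k\<in>UNIV. R i j k * y $ k) = - Q i j"
proof -
  show "(\<Sum>i\<in>UNIV. lcov F i y * y $ i) = F y" "(\<Sum>i\<in>UNIV. Q i j * y $ i) = 0"
    "(\<Sum>k\<in>UNIV. R i j k * y $ k) = - Q i j"
    using assms(2) unfolding euler_jet_def by blast+
  have "(\<Sum>j\<in>UNIV. Q i j * y $ j) = (\<Sum>j\<in>UNIV. Q j i * y $ j)"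
    by (intro sum.cong refl) (simp add: fibre_jetD(1)[OF assms(1), of i])
  then show "(\<Sum>j\<in>UNIV. Q i j * y $ j) = 0"
    using assms(2) unfolding euler_jet_def by simp
qed

lemma fund_symmetric:
  assumes "fibre_jet F y Q R"
  shows "fund F a b y = fund F b a y"
  using fibre_jetD[OF assms] by (simp add: mult.commute)

lemma ginv_lcov:
  assumes jet: "fibre_jet F y Q R" "euler_jet F y Q R"
    and F0: "F y \<noteq> 0" and inv: "invertible (gmat F y)"
  shows "(\<Sum>j\<in>UNIV. ginv F i j y * lcov F j y) = y $ i / F y"
proof -
  have gy: "(\<Sum>k\<in>UNIV. fund F j k y * y $ k) = F y * lcov F j y" for j
  proof -
    have "(\<Sum>k\<in>UNIV. fund F j k y * y $ k)
        = lcov F j y * (\<Sum>k\<in>UNIV. lcov F k y * y $ k) + F y * (\<Sum>k\<in>UNIV. Q j k * y $ k)"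
      by (simp add: fibre_jetD(3)[OF jet(1)] algebra_simps sum.distrib sum_distrib_left)
    then show ?thesis by (simp add: euler_jetD[OF jet])
  qed
  have "F y * (\<Sum>j\<in>UNIV. ginv F i j y * lcov F j y) = (\<Sum>j\<in>UNIV. ginv F i j y * (\<Sum>k\<in>UNIV. fund F j k y * y $ k))"
    by (simp only: gy) (simp add: sum_distrib_left mult_ac)
  also have "\<dots> = (\<Sum>k\<in>UNIV. \<Sum>j\<in>UNIV. ginv F i j y * (fund F j k y * y $ k))"
    by (rule sum_mult_sum_swap)
  also have "\<dots> = (\<Sum>k\<in>UNIV. (\<Sum>j\<in>UNIV. ginv F i j y * fund F j k y) * y $ k)"
    by (simp add: sum_distrib_right sum_distrib_left mult_ac)
  also have "\<dots> = (\<Sum>k\<in>UNIV. if i = k then y $ k else 0)"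
    by (rule sum.cong) (auto simp: ginv_fund(1)[OF inv])
  also have "\<dots> = y $ i" by simp
  finally show ?thesis using F0 by (simp add: field_simps)
qed

lemma angular_frame_fibre_jet:
  assumes jet: "fibre_jet F y Q R" "euler_jet F y Q R"
    and F0: "F y \<noteq> 0" and inv: "invertible (gmat F y)"
    and m: "(\<Sum>s\<in>UNIV. m s * y $ s) = 0"
  shows "angular_frame (\<lambda>r s. ginv F r s y) (\<lambda>r s. hang F r s y) (\<lambda>k. y $ k) (\<lambda>s. lcov F s y / F y) m"
proof
  show "ginv F a b y = ginv F b a y" for a b
    by (rule ginv_sym[OF inv fund_symmetric[OF jet(1)]])
  show "hang F a b y = hang F b a y" for a b
    by (simp add: fibre_jetD(5)[OF jet(1)] fibre_jetD(1)[OF jet(1), of a b])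
  show "(\<Sum>j\<in>UNIV. ginv F a j y * hang F j b y) = (if a = b then 1 else 0) - y $ a * (lcov F b y / F y)" for a b
  proof -
    have "(\<Sum>j\<in>UNIV. ginv F a j y * hang F j b y)
        = (\<Sum>j\<in>UNIV. ginv F a j y * fund F j b y - (ginv F a j y * lcov F j y) * lcov F b y)"
      by (intro sum.cong refl) (simp add: hang_def algebra_simps)
    also have "\<dots> = (\<Sum>j\<in>UNIV. ginv F a j y * fund F j b y) - (\<Sum>j\<in>UNIV. ginv F a j y * lcov F j y) * lcov F b y"
      by (simp add: sum_subtractf sum_distrib_right)
    finally have "(\<Sum>j\<in>UNIV. ginv F a j y * hang F j b y)
        = (\<Sum>j\<in>UNIV. ginv F a j y * fund F j b y) - (\<Sum>j\<in>UNIV. ginv F a j y * lcov F j y) * lcov F b y" .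
    then show ?thesis by (simp add: ginv_lcov[OF jet F0 inv] ginv_fund(1)[OF inv])
  qed
  show "(\<Sum>b\<in>UNIV. hang F a b y * y $ b) = 0" for a
    using euler_jetD(3)[OF jet, of a]
    by (simp add: fibre_jetD(5)[OF jet(1)] sum_distrib_left[symmetric] mult.assoc del: sum_distrib_left)
  show "(\<Sum>s\<in>UNIV. y $ s * (lcov F s y / F y)) = 1"
    using euler_jetD(1)[OF jet] F0 by (simp add: sum_divide_distrib[symmetric] mult.commute)
qed (fact m)

lemma indicatory_cten:
  assumes jet: "fibre_jet F y Q R" "euler_jet F y Q R"
  shows "symmetric3 (\<lambda>r s t. cten F r s t y)" "indicatory (\<lambda>k. y $ k) (\<lambda>r s t. cten F r s t y)"
proof -
  show "symmetric3 (\<lambda>r s t. cten F r s t y)"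
    using fibre_jetD(1,2)[OF jet(1)] unfolding symmetric3_def fibre_jetD(4)[OF jet(1)]
    by (auto simp: algebra_simps)
  have "(\<Sum>r\<in>UNIV. cten F a b r y * y $ r) = 0" for a b
  proof -
    have "(\<Sum>r\<in>UNIV. cten F a b r y * y $ r)
        = (\<Sum>r\<in>UNIV. (lcov F b y / 2) * (Q r a * y $ r) + (lcov F a y / 2) * (Q r b * y $ r)
          + (Q a b / 2) * (lcov F r y * y $ r) + (F y / 2) * (R a b r * y $ r))"
      by (intro sum.cong refl) (simp add: fibre_jetD(4)[OF jet(1)] field_simps)
    also have "\<dots> = (lcov F b y / 2) * (\<Sum>r\<in>UNIV. Q r a * y $ r) + (lcov F a y / 2) * (\<Sum>r\<in>UNIV. Q r b * y $ r)
          + (Q a b / 2) * (\<Sum>r\<in>UNIV. lcov F r y * y $ r) + (F y / 2) * (\<Sum>r\<in>UNIV. R a b r * y $ r)"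
      by (simp only: sum.distrib sum_distrib_left[symmetric])
    finally show ?thesis by (simp add: euler_jetD[OF jet])
  qed
  then show "indicatory (\<lambda>k. y $ k) (\<lambda>r s t. cten F r s t y)"
    unfolding indicatory_def by blast
qed

lemma mcov_y:
  assumes "(\<Sum>i\<in>UNIV. lcov F i y * y $ i) = F y" "F y \<noteq> 0"
  shows "(\<Sum>s\<in>UNIV. mcov F bv s y * y $ s) = 0"
proof -
  have "(\<Sum>s\<in>UNIV. mcov F bv s y * y $ s)
      = (\<Sum>s\<in>UNIV. bv $ s * y $ s) - betaf bv y / F y * (\<Sum>s\<in>UNIV. lcov F s y * y $ s)"
    unfolding mcov_def by (simp add: algebra_simps sum_subtractf sum_distrib_left)
  then show ?thesis using assms by (simp add: betaf_def)
qed

lemma cten_scale_add_betaf: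
  assumes jet: "fibre_jet F y Q R" and jets: "fibre_jet Fs y (\<lambda>i j. a * Q i j) (\<lambda>i j k. a * R i j k)"
    and Fs_y: "Fs y = a * F y + betaf bv y" and ls: "\<And>i. lcov Fs i y = a * lcov F i y + bv $ i"
    and F0: "F y \<noteq> 0" and Fs0: "Fs y \<noteq> 0"
  shows "cten Fs r s t y = a * Fs y / F y *
    (cten F r s t y + 1 / (2 * Fs y) * sym_prod (\<lambda>i j. hang F i j y) (\<lambda>k. mcov F bv k y) r s t)"
proof -
  have lsm: "lcov Fs k y = Fs y / F y * lcov F k y + mcov F bv k y" for k
    using F0 by (simp add: ls mcov_def Fs_y field_simps)
  show ?thesis
    unfolding fibre_jetD(4)[OF jets] fibre_jetD(4)[OF jet] lsm sym_prod_def fibre_jetD(5)[OF jet]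
    using F0 Fs0 by (simp add: fibre_jetD(1)[OF jet, of t] field_simps)
qed

lemma scaled_inverse_scale_add_betaf:
  assumes jet: "fibre_jet F y Q R" "euler_jet F y Q R"
    and jets: "fibre_jet Fs y (\<lambda>i j. a * Q i j) (\<lambda>i j k. a * R i j k)"
    and Fs_y: "Fs y = a * F y + betaf bv y" and ls: "\<And>i. lcov Fs i y = a * lcov F i y + bv $ i"
    and F0: "F y \<noteq> 0" and Fs0: "Fs y \<noteq> 0" and a0: "a \<noteq> 0"
    and inv: "invertible (gmat F y)" and invs: "invertible (gmat Fs y)"
  shows "scaled_inverse (\<lambda>r s. fund Fs r s y) (\<lambda>r s. ginv Fs r s y) (\<lambda>r s. ginv F r s y)
    (\<lambda>r s. hang F r s y) (\<lambda>k. y $ k) (\<lambda>k. lcov F k y) (\<lambda>k. lcov Fs k y) (a * Fs y / F y) (F y) (Fs y)"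
proof
  interpret angular_frame "\<lambda>r s. ginv F r s y" "\<lambda>r s. hang F r s y" "\<lambda>k. y $ k" "\<lambda>s. lcov F s y / F y"
    "\<lambda>k. mcov F bv k y"
    by (rule angular_frame_fibre_jet[OF jet F0 inv mcov_y[OF euler_jetD(1)[OF jet] F0]])
  show "(\<Sum>k\<in>UNIV. ginv Fs r k y * fund Fs k s y) = (if r = s then 1 else 0)" for r s
    by (rule ginv_fund(1)[OF invs])
  show "fund Fs r s y = a * Fs y / F y * hang F r s y + lcov Fs r y * lcov Fs s y" for r s
    using F0 by (simp add: fibre_jetD(3)[OF jets] fibre_jetD(5)[OF jet(1)])
  show "(\<Sum>m\<in>UNIV. hang F k m y * ginv F m j y) = (if k = j then 1 else 0) - lcov F k y * y $ j / F y" for k j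
    using ginv_angular[of j k] by (simp add: gi_sym h_sym mult.commute)
  show "(\<Sum>m\<in>UNIV. fund Fs k m y * y $ m) = Fs y * lcov Fs k y" for k
  proof -
    have "(\<Sum>m\<in>UNIV. fund Fs k m y * y $ m)
        = lcov Fs k y * (\<Sum>m\<in>UNIV. lcov Fs m y * y $ m) + Fs y * a * (\<Sum>m\<in>UNIV. Q k m * y $ m)"
      by (simp add: fibre_jetD(3)[OF jets] algebra_simps sum.distrib sum_distrib_left)
    moreover have "(\<Sum>m\<in>UNIV. lcov Fs m y * y $ m) = Fs y"
    proof -
      have "(\<Sum>m\<in>UNIV. lcov Fs m y * y $ m) = a * (\<Sum>m\<in>UNIV. lcov F m y * y $ m) + (\<Sum>m\<in>UNIV. bv $ m * y $ m)"
        by (simp add: ls algebra_simps sum.distrib sum_distrib_left)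
      then show ?thesis using euler_jetD(1)[OF jet] by (simp add: Fs_y betaf_def)
    qed
    ultimately show ?thesis by (simp add: euler_jetD(3)[OF jet])
  qed
qed (use F0 Fs0 a0 in auto)

lemma S2_S0_cten:
  "S2 F i k y = S2_wrt (\<lambda>r s. ginv F r s y) (\<lambda>r s t. cten F r s t y) i k"
  "S0 F y = S0_wrt (\<lambda>r s. ginv F r s y) (\<lambda>r s t. cten F r s t y)"
  unfolding S0_def S0_wrt_def S2_def S4_def cmix_def S2_wrt_def S4_wrt_def by simp_all

lemma Hten_transvect:
  assumes "\<And>a b. ginv F a b y = ginv F b a y"
  shows "Hten F Fs bv i j y = transvect (\<lambda>r s. ginv F r s y) (\<lambda>r s t. cten F r s t y) (\<lambda>k. mcov F bv k y) i j
     + mcov F bv i y * mcov F bv j y / (2 * Fs y)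
     + hang F i j y * (\<Sum>r\<in>UNIV. mcov F bv r y * raise (\<lambda>r s. ginv F r s y) (\<lambda>k. mcov F bv k y) r) / (4 * Fs y)"
proof -
  have "(\<Sum>r\<in>UNIV. cmix F i r j y * mcov F bv r y)
      = (\<Sum>r\<in>UNIV. \<Sum>k\<in>UNIV. mcov F bv r y * (ginv F k r y * cten F i j k y))"
    unfolding cmix_def by (simp add: sum_distrib_left assms mult_ac)
  also have "\<dots> = transvect (\<lambda>r s. ginv F r s y) (\<lambda>r s t. cten F r s t y) (\<lambda>k. mcov F bv k y) i j"
    unfolding transvect_def raise_def by (subst sum.swap) (simp add: sum_distrib_left mult_ac)
  finally show ?thesis
    unfolding Hten_def msq_def mcon_def raise_def by simp
qed

lemma Mten_arith:
  fixes n S2 S0 cm CM m2 h mi mj Fs p :: real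
  assumes "n \<noteq> 3" "n \<noteq> 2" "Fs \<noteq> 0" "p \<noteq> 0"
  defines "\<kappa> \<equiv> 1 / (2 * Fs)"
  shows "1 / (n - 3) * ((S2 + \<kappa> * ((3 - n) * cm - h * CM) + \<kappa>^2 * ((1 - n) * m2 * h + (3 - n) * mi * mj))
          - (S0 - 2 * (n - 2) * \<kappa> * CM - (n + 1) * (n - 2) * \<kappa>^2 * m2) / p * (p * h) / (2 * (n - 2)))
       = 1 / (n - 3) * (S2 - S0 * h / (2 * (n - 2))) - (cm + mi * mj / (2 * Fs) + h * m2 / (4 * Fs)) / (2 * Fs)"
proof -
  have "(S0 - 2 * (n - 2) * \<kappa> * CM - (n + 1) * (n - 2) * \<kappa>^2 * m2) / p * (p * h) / (2 * (n - 2))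
      = S0 * h / (2 * (n - 2)) - \<kappa> * CM * h - (n + 1) / 2 * \<kappa>^2 * m2 * h"
    using assms(2,4) by (simp add: field_simps)
  \<comment> \<open>The multiples of h cancel because (1 - n) + (n + 1)/2 = (3 - n)/2.\<close>
  then have inner: "(S2 + \<kappa> * ((3 - n) * cm - h * CM) + \<kappa>^2 * ((1 - n) * m2 * h + (3 - n) * mi * mj))
          - (S0 - 2 * (n - 2) * \<kappa> * CM - (n + 1) * (n - 2) * \<kappa>^2 * m2) / p * (p * h) / (2 * (n - 2))
      = (S2 - S0 * h / (2 * (n - 2))) - (n - 3) * (\<kappa> * cm + \<kappa>^2 * (mi * mj + m2 * h / 2))"
    by (simp add: field_simps)
  have Y: "\<kappa> * cm + \<kappa>^2 * (mi * mj + m2 * h / 2) = (cm + mi * mj / (2 * Fs) + h * m2 / (4 * Fs)) / (2 * Fs)"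
    unfolding \<kappa>_def using assms(3) by (simp add: field_simps power2_eq_square)
  have "1 / (n - 3) * (A - (n - 3) * X) = 1 / (n - 3) * A - X" for A X :: real
    using assms(1) by (simp add: field_simps)
  then show ?thesis
    unfolding inner Y .
qed

lemma Mten_scale_add_betaf:
  fixes F Fs :: "real^'n::finite \<Rightarrow> real"
  assumes n: "CARD('n) > 3"
    and jet: "fibre_jet F y Q R" "euler_jet F y Q R"
    and jets: "fibre_jet Fs y (\<lambda>i j. a * Q i j) (\<lambda>i j k. a * R i j k)"
    and Fs_y: "Fs y = a * F y + betaf bv y" and ls: "\<And>i. lcov Fs i y = a * lcov F i y + bv $ i"
    and F0: "F y > 0" and Fs0: "Fs y > 0" and a0: "a > 0"
    and inv: "invertible (gmat F y)" and invs: "invertible (gmat Fs y)"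
  shows "Mten Fs i j y = Mten F i j y - Hten F Fs bv i j y / (2 * Fs y)"
proof -
  define gi where "gi r s = ginv F r s y" for r s
  define c where "c r s t = cten F r s t y" for r s t
  define m where "m k = mcov F bv k y" for k
  define p where "p = a * Fs y / F y"
  define \<kappa> where "\<kappa> = 1 / (2 * Fs y)"
  have F0': "F y \<noteq> 0" and Fs0': "Fs y \<noteq> 0" and p0: "p \<noteq> 0"
    using F0 Fs0 a0 by (auto simp: p_def)
  interpret angular_frame gi "\<lambda>r s. hang F r s y" "\<lambda>k. y $ k" "\<lambda>s. lcov F s y / F y" m
    unfolding gi_def m_def by (rule angular_frame_fibre_jet[OF jet F0' inv mcov_y[OF euler_jetD(1)[OF jet] F0']])
  interpret scaled_inverse "\<lambda>r s. fund Fs r s y" "\<lambda>r s. ginv Fs r s y" gi "\<lambda>r s. hang F r s y" "\<lambda>k. y $ k"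
      "\<lambda>k. lcov F k y" "\<lambda>k. lcov Fs k y" p "F y" "Fs y"
    unfolding gi_def p_def
    by (rule scaled_inverse_scale_add_betaf[OF jet jets Fs_y ls F0' Fs0' _ inv invs]) (use a0 in simp)
  note c = indicatory_cten[OF jet, folded c_def]
  have cs: "cten Fs r s t y = p * (c r s t + \<kappa> * sym_prod (\<lambda>i j. hang F i j y) m r s t)" for r s t
    unfolding p_def c_def \<kappa>_def m_def by (rule cten_scale_add_betaf[OF jet(1) jets Fs_y ls F0' Fs0'])
  have perturbed: "symmetric3 (\<lambda>r s t. c r s t + \<kappa> * sym_prod (\<lambda>i j. hang F i j y) m r s t)"
    "indicatory (\<lambda>k. y $ k) (\<lambda>r s t. c r s t + \<kappa> * sym_prod (\<lambda>i j. hang F i j y) m r s t)"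
    using c symmetric3_sym_prod indicatory_sym_prod
    by (auto simp: symmetric3_def indicatory_def algebra_simps sum.distrib sum_distrib_left[symmetric])
  have hang_s: "hang Fs i j y = p * hang F i j y"
    using F0' by (simp add: hang_def fibre_jetD(3)[OF jets] fibre_jetD(3)[OF jet(1)] p_def)
  show ?thesis
    unfolding Mten_def S2_S0_cten S2_S0_wrt_scaled[OF cs perturbed] S2_wrt_perturb[OF c] S0_wrt_perturb[OF c]
      hang_s Hten_transvect[OF gi_sym[unfolded gi_def]]
    unfolding gi_def[symmetric] c_def[symmetric] m_def[symmetric] \<kappa>_def
    using n by (intro Mten_arith) (use Fs0' p0 in auto)
qed

theorem lemma5:
  fixes U :: "(real^'n::finite) set"
    and L :: "real^'n \<Rightarrow> real^'n \<Rightarrow> real"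
    and \<sigma> :: "real^'n \<Rightarrow> real"
    and b :: "real^'n \<Rightarrow> real^'n"
  assumes n: "CARD('n) > 3"
    and FL: "finsler_on U L"
    and sig: "smooth_on U \<sigma>"
    and bsm: "\<forall>i. smooth_on U (\<lambda>x. b x $ i)"
    and FLs: "finsler_on U (conf_beta \<sigma> b L)"
  shows "\<forall>x\<in>U. \<forall>y. y \<noteq> 0 \<longrightarrow> (\<forall>i j.
           Mten (conf_beta \<sigma> b L x) i j y =
             Mten (L x) i j y
             - Hten (L x) (conf_beta \<sigma> b L x) (b x) i j y / (2 * conf_beta \<sigma> b L x y))"
proof (intro ballI allI impI)
  \<comment> \<open>The identity is pointwise in x.\<close>
  fix x y i j
  assume x: "x \<in> U" and y: "(y::real^'n) \<noteq> 0"
  have Fs_eq: "conf_beta \<sigma> b L x = (\<lambda>w. exp (\<sigma> x) * L x w + betaf (b x) w)"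
    by (simp add: conf_beta_def fun_eq_iff)
  have F: "fibre_smooth (L x)" and Fs: "fibre_smooth (conf_beta \<sigma> b L x)"
    using fibre_smooth_finsler[OF FL x] fibre_smooth_finsler[OF FLs x] .
  have hom: "\<And>w s. w \<noteq> 0 \<Longrightarrow> s > 0 \<Longrightarrow> L x (s *\<^sub>R w) = s * L x w"
    using FL x unfolding finsler_on_def by blast
  show "Mten (conf_beta \<sigma> b L x) i j y
      = Mten (L x) i j y - Hten (L x) (conf_beta \<sigma> b L x) (b x) i j y / (2 * conf_beta \<sigma> b L x y)"
  proof (rule Mten_scale_add_betaf[OF n fibre_jet_pdy[OF F y] euler_jet_pdy[OF F y hom]
        fibre_jet_scale_add_betaf[OF F Fs y Fs_eq]])
    show "lcov (conf_beta \<sigma> b L x) k y = exp (\<sigma> x) * lcov (L x) k y + b x $ k" for k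
      unfolding lcov_def Fs_eq by (rule pdy_scale_add_betaf[OF F y])
    show "invertible (gmat (L x) y)" "invertible (gmat (conf_beta \<sigma> b L x) y)"
      by (rule invertible_posdef, use FL FLs x y in \<open>auto simp: finsler_on_def gmat_def\<close>)+
  qed (use FL FLs x y in \<open>auto simp: finsler_on_def Fs_eq\<close>)
qed

end
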